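(* Let $P_0$ be a probability measure on $[-a,a]^d\subset\mathbb{R}^d$. For any $\varepsilon>0$ and $\sigma>0$ there is a discrete probability measure $F^*_\sigma$ on $[-a,a]^d$ with at most $N_{\sigma,\varepsilon}=D[\{(a/\sigma)\vee1\}\log(1/\varepsilon)]^d$ support points, all in the grid $\{(n_1,\dots,n_d)\sigma\varepsilon: n_i\in\mathbb{Z},\ |n_i|<\lceil a/(\sigma\varepsilon)\rceil,\ i=1,\dots,d\}$, such that $\|p_{P_0,\sigma}-p_{F^*_\sigma,\sigma}\|_\infty\lesssim\varepsilon/\sigma^d$ and $\|p_{P_0,\sigma}-p_{F^*_\sigma,\sigma}\|_1\lesssim\varepsilon\{\log(1/\varepsilon)\}^{1/2}$, where $D$ is a universal constant.
   Context: $\phi_\sigma$ is the density of $N(0,\sigma^2I_d)$ and, for a probability measure $F$ on $\mathbb{R}^d$, $p_{F,\sigma}(x)=\int\phi_\sigma(x-z)\,dF(z)$. $\lesssim$ means inequality up to a universal constant (not depending on $\varepsilon,\sigma,P_0$). *)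

theory Defs
  imports "HOL-Probability.Probability"
begin

definition gauss_dens :: "real \<Rightarrow> real^'n \<Rightarrow> real" where
  "gauss_dens \<sigma> x =
     (2 * pi * \<sigma>\<^sup>2) powr (- real CARD('n) / 2) * exp (- (norm x)\<^sup>2 / (2 * \<sigma>\<^sup>2))"

definition mix_dens :: "(real^'n) measure \<Rightarrow> real \<Rightarrow> real^'n \<Rightarrow> real" where
  "mix_dens F \<sigma> x = (\<integral>z. gauss_dens \<sigma> (x - z) \<partial>F)"

definition cube :: "real \<Rightarrow> (real^'n) set" where
  "cube a = {x. \<forall>i. \<bar>x $ i\<bar> \<le> a}"

definition grid :: "real \<Rightarrow> real \<Rightarrow> real \<Rightarrow> (real^'n) set" where
  "grid a \<sigma> \<epsilon> = {x. \<exists>n :: 'n \<Rightarrow> int.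
      (\<forall>i. \<bar>n i\<bar> < \<lceil>a / (\<sigma> * \<epsilon>)\<rceil> \<and> x $ i = real_of_int (n i) * \<sigma> * \<epsilon>)}"

end

theory Submission
  imports Defs
begin

(* Discretise P0 in two steps. First round every point of the cube to the grid of mesh sigma eps:
   moving the centre of a Gaussian of width sigma by at most sigma eps per coordinate changes its
   density by O(eps) times a Gaussian of width 2 sigma, so the rounded measure is O(eps)-close in
   both norms. Then split the cube into cells of side sigma and, by a Caratheodory argument, replace
   the grid weights by at most (2k + 1)^d weights per cell with the same moments of coordinatewise
   order at most 2k, where k ~ log(1/eps). After rescaling a cell to the unit cube, the moment
   conditions kill the degree-2k Taylor polynomial of the Gaussian kernel around the cell, and the
   remainder is e^-k times a Gaussian envelope of width 2 sigma; far from the cell every term is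
   already that small. Each error is eps times a probability density bounded by sigma^-d, which
   gives the sup bound and even an L1 bound of order eps. *)

section \<open>Reducing the support while preserving moments\<close>

lemma underdetermined_system_nontrivial_solution:
  fixes m :: "'t \<Rightarrow> 'z \<Rightarrow> real"
  assumes "finite T" "finite Z" "card T < card Z"
  shows "\<exists>l. (\<exists>z\<in>Z. l z \<noteq> 0) \<and> (\<forall>t\<in>T. (\<Sum>z\<in>Z. l z * m t z) = 0)"
  using assms
proof (induction T arbitrary: Z m rule: finite_induct)
  case empty
  then obtain z where "z \<in> Z" by fastforce
  then show ?case by (intro exI[of _ "\<lambda>_. 1"]) auto
next
  case (insert t0 T)
  show ?case
  proof (cases "\<forall>z\<in>Z. m t0 z = 0")
    case True
    have "card T < card Z" using insert.hyps insert.prems by simp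
    with insert.IH[of Z m] insert.prems obtain l where
      "\<exists>z\<in>Z. l z \<noteq> 0" "\<forall>t\<in>T. (\<Sum>z\<in>Z. l z * m t z) = 0" by auto
    with True show ?thesis by (intro exI[of _ l]) auto
  next
    case False
    then obtain z0 where z0: "z0 \<in> Z" "m t0 z0 \<noteq> 0" by auto
    \<comment> \<open>Gaussian elimination: use the equation of \<open>t0\<close> to eliminate the unknown at \<open>z0\<close>.\<close>
    define m' where "m' t z = m t z - m t z0 * m t0 z / m t0 z0" for t z
    have "card T < card (Z - {z0})"
      using insert.prems insert.hyps z0 by (simp add: card_Diff_singleton)
    with insert.IH[of "Z - {z0}" m'] insert.prems obtain \<mu> where
      \<mu>: "\<exists>z\<in>Z-{z0}. \<mu> z \<noteq> 0" "\<forall>t\<in>T. (\<Sum>z\<in>Z-{z0}. \<mu> z * m' t z) = 0" by auto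
    define l where "l z = (if z = z0 then - (\<Sum>y\<in>Z-{z0}. \<mu> y * m t0 y) / m t0 z0 else \<mu> z)" for z
    have split: "(\<Sum>z\<in>Z. l z * m t z) = l z0 * m t z0 + (\<Sum>z\<in>Z-{z0}. \<mu> z * m t z)" for t
      using insert.prems z0 by (simp add: sum.remove l_def)
    have "(\<Sum>z\<in>Z. l z * m t z) = 0" if t: "t \<in> insert t0 T" for t
    proof (cases "t = t0")
      case True
      show ?thesis unfolding True split using z0 by (simp add: l_def)
    next
      case False
      have "(\<Sum>z\<in>Z-{z0}. \<mu> z * m' t z) = (\<Sum>z\<in>Z-{z0}. \<mu> z * m t z)
            - m t z0 / m t0 z0 * (\<Sum>z\<in>Z-{z0}. \<mu> z * m t0 z)"
        by (simp add: m'_def right_diff_distrib sum_subtractf sum_distrib_left mult_ac)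
      with \<mu>(2) False t show ?thesis unfolding split by (simp add: l_def)
    qed
    moreover have "\<exists>z\<in>Z. l z \<noteq> 0" using \<mu>(1) by (auto simp: l_def)
    ultimately show ?thesis by blast
  qed
qed

lemma reduce_support_preserving_moments_step:
  fixes m :: "'t \<Rightarrow> 'z \<Rightarrow> real"
  assumes T: "finite T" and S: "finite S" and q: "\<forall>z. 0 \<le> q z"
    and card: "card T < card {z\<in>S. q z \<noteq> 0}"
  shows "\<exists>q'. (\<forall>z. 0 \<le> q' z) \<and> (\<forall>z. q' z \<noteq> 0 \<longrightarrow> z \<in> S \<and> q z \<noteq> 0) \<and>
     card {z\<in>S. q' z \<noteq> 0} < card {z\<in>S. q z \<noteq> 0} \<and>
     (\<forall>t\<in>T. (\<Sum>z\<in>S. q' z * m t z) = (\<Sum>z\<in>S. q z * m t z))"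
proof -
  define Z where "Z = {z\<in>S. q z \<noteq> 0}"
  have Z: "finite Z" "Z \<subseteq> S" using S by (auto simp: Z_def)
  obtain l0 where l0: "\<exists>z\<in>Z. l0 z \<noteq> 0" "\<forall>t\<in>T. (\<Sum>z\<in>Z. l0 z * m t z) = 0"
    using underdetermined_system_nontrivial_solution[OF T Z(1) card[folded Z_def]] by blast
  obtain l where l: "\<exists>z\<in>Z. l z > 0" "\<forall>t\<in>T. (\<Sum>z\<in>Z. l z * m t z) = 0"
  proof (cases "\<exists>z\<in>Z. l0 z > 0")
    case False
    then have "\<exists>z\<in>Z. - l0 z > 0" using l0(1) by force
    with l0(2) show ?thesis by (intro that[of "\<lambda>z. - l0 z"]) (simp_all add: sum_negf)
  qed (use l0 in blast)
  \<comment> \<open>Move along \<open>-l\<close> until the first coordinate of the support hits zero.\<close>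
  define R where "R = (\<lambda>z. q z / l z) ` {z\<in>Z. l z > 0}"
  have R: "finite R" "R \<noteq> {}" using Z l(1) by (auto simp: R_def)
  obtain zs where zs: "zs \<in> Z" "l zs > 0" "Min R = q zs / l zs"
    using Min_in[OF R] by (auto simp: R_def)
  have Min_le: "Min R \<le> q z / l z" if "z \<in> Z" "l z > 0" for z
    using Min_le[OF R(1)] that by (auto simp: R_def)
  have Min_nonneg: "Min R \<ge> 0" using zs q by auto
  define q' where "q' z = (if z \<in> Z then q z - Min R * l z else 0)" for z
  have q'_nonneg: "0 \<le> q' z" for z
  proof (cases "z \<in> Z \<and> l z > 0")
    case True then show ?thesis using Min_le[of z] by (auto simp: q'_def field_simps)
  next
    case False
    then have "z \<in> Z \<Longrightarrow> Min R * l z \<le> 0" using Min_nonneg mult_nonneg_nonpos[of "Min R" "l z"] by auto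
    then show ?thesis using q[rule_format, of z] by (cases "z \<in> Z") (auto simp: q'_def)
  qed
  have q'_card: "card {z\<in>S. q' z \<noteq> 0} < card Z"
  proof -
    have "{z\<in>S. q' z \<noteq> 0} \<subseteq> Z - {zs}" using zs by (auto simp: q'_def)
    then have "card {z\<in>S. q' z \<noteq> 0} \<le> card (Z - {zs})" using Z by (intro card_mono) auto
    also have "\<dots> < card Z" using zs Z by (meson card_Diff1_less)
    finally show ?thesis .
  qed
  have q'_moments: "(\<Sum>z\<in>S. q' z * m t z) = (\<Sum>z\<in>S. q z * m t z)" if "t \<in> T" for t
  proof -
    have "(\<Sum>z\<in>S. q' z * m t z) = (\<Sum>z\<in>Z. q' z * m t z)"
      using S Z by (intro sum.mono_neutral_right) (auto simp: q'_def)
    also have "\<dots> = (\<Sum>z\<in>Z. q z * m t z) - Min R * (\<Sum>z\<in>Z. l z * m t z)"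
      by (simp add: q'_def algebra_simps sum_subtractf sum_distrib_left)
    also have "\<dots> = (\<Sum>z\<in>Z. q z * m t z)" using l(2) that by simp
    also have "\<dots> = (\<Sum>z\<in>S. q z * m t z)"
      using S Z by (intro sum.mono_neutral_left) (auto simp: Z_def)
    finally show ?thesis .
  qed
  have q'_support: "\<forall>z. q' z \<noteq> 0 \<longrightarrow> z \<in> S \<and> q z \<noteq> 0" by (simp add: q'_def Z_def)
  show ?thesis
    by (rule exI[of _ q']) (use q'_nonneg q'_support q'_card q'_moments in \<open>simp add: Z_def\<close>)
qed

lemma reduce_support_preserving_moments:
  fixes m :: "'t \<Rightarrow> 'z \<Rightarrow> real"
  assumes T: "finite T" and S: "finite S" and q: "\<forall>z. 0 \<le> q z"
  shows "\<exists>f. (\<forall>z. 0 \<le> f z) \<and> (\<forall>z. f z \<noteq> 0 \<longrightarrow> z \<in> S \<and> q z \<noteq> 0) \<and>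
     card {z\<in>S. f z \<noteq> 0} \<le> card T \<and>
     (\<forall>t\<in>T. (\<Sum>z\<in>S. f z * m t z) = (\<Sum>z\<in>S. q z * m t z))"
  using q
proof (induction "card {z\<in>S. q z \<noteq> 0}" arbitrary: q rule: less_induct)
  case less
  show ?case
  proof (cases "card {z\<in>S. q z \<noteq> 0} \<le> card T")
    case True
    define f where "f z = (if z \<in> S then q z else 0)" for z
    have "{z\<in>S. f z \<noteq> 0} = {z\<in>S. q z \<noteq> 0}" by (auto simp: f_def)
    with True less.prems show ?thesis
      by (intro exI[of _ f]) (auto simp: f_def intro!: sum.cong)
  next
    case False
    then have "card T < card {z\<in>S. q z \<noteq> 0}" by simp
    then obtain q' where q': "\<forall>z. 0 \<le> q' z" "\<forall>z. q' z \<noteq> 0 \<longrightarrow> z \<in> S \<and> q z \<noteq> 0"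
      "card {z\<in>S. q' z \<noteq> 0} < card {z\<in>S. q z \<noteq> 0}"
      "\<forall>t\<in>T. (\<Sum>z\<in>S. q' z * m t z) = (\<Sum>z\<in>S. q z * m t z)"
      using reduce_support_preserving_moments_step[OF T S less.prems] by blast
    obtain f where f: "\<forall>z. 0 \<le> f z" "\<forall>z. f z \<noteq> 0 \<longrightarrow> z \<in> S \<and> q' z \<noteq> 0"
      "card {z\<in>S. f z \<noteq> 0} \<le> card T" "\<forall>t\<in>T. (\<Sum>z\<in>S. f z * m t z) = (\<Sum>z\<in>S. q' z * m t z)"
      using less.hyps[OF q'(3,1)] by blast
    have "\<forall>z. f z \<noteq> 0 \<longrightarrow> z \<in> S \<and> q z \<noteq> 0" using f(2) q'(2) by blast
    moreover have "\<forall>t\<in>T. (\<Sum>z\<in>S. f z * m t z) = (\<Sum>z\<in>S. q z * m t z)" using f(4) q'(4) by simp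
    ultimately show ?thesis using f(1,3) by blast
  qed
qed

section \<open>Polynomials with bounded exponents\<close>

definition exps_box :: "nat \<Rightarrow> ('n::finite \<Rightarrow> nat) set" where
  "exps_box M = {\<alpha>. \<forall>i. \<alpha> i \<le> M}"

definition vmonom :: "('n::finite \<Rightarrow> nat) \<Rightarrow> real^'n \<Rightarrow> real" where
  "vmonom \<alpha> v = (\<Prod>i\<in>UNIV. (v$i) ^ \<alpha> i)"

definition box_poly :: "nat \<Rightarrow> (real^'n::finite \<Rightarrow> real) \<Rightarrow> bool" where
  "box_poly M h \<longleftrightarrow> (\<exists>c. \<forall>v. h v = (\<Sum>\<alpha>\<in>exps_box M. c \<alpha> * vmonom \<alpha> v))"

lemma exps_box_eq_PiE: "exps_box M = PiE UNIV (\<lambda>_. {..M})"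
  by (auto simp: exps_box_def PiE_UNIV_domain)

lemma finite_exps_box [simp]: "finite (exps_box M)"
  unfolding exps_box_eq_PiE by (intro finite_PiE) auto

lemma card_exps_box: "card (exps_box M :: ('n::finite \<Rightarrow> nat) set) = (M + 1) ^ CARD('n)"
  unfolding exps_box_eq_PiE by (simp add: card_PiE)

lemma vmonom_mult: "vmonom \<alpha> v * vmonom \<beta> v = vmonom (\<lambda>i. \<alpha> i + \<beta> i) v"
  by (simp add: vmonom_def power_add prod.distrib)

lemma vmonom_zero: "vmonom (\<lambda>_. 0) v = 1"
  by (simp add: vmonom_def)

lemma vmonom_axis: "vmonom (\<lambda>j. if j = i then k else 0) v = (v$i) ^ k"
  by (simp add: vmonom_def if_distrib prod.delta cong: if_cong)

lemma box_poly_vmonom: "\<alpha> \<in> exps_box M \<Longrightarrow> box_poly M (vmonom \<alpha>)"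
  unfolding box_poly_def
proof (intro exI[of _ "\<lambda>\<beta>. if \<beta> = \<alpha> then 1 else 0"] allI)
  fix v assume "\<alpha> \<in> exps_box M"
  then show "vmonom \<alpha> v = (\<Sum>\<beta>\<in>exps_box M. (if \<beta> = \<alpha> then 1 else 0) * vmonom \<beta> v)"
  proof -
    have "(\<Sum>\<beta>\<in>exps_box M. (if \<beta> = \<alpha> then 1 else 0) * vmonom \<beta> v)
        = (\<Sum>\<beta>\<in>exps_box M. if \<beta> = \<alpha> then vmonom \<beta> v else 0)"
      by (intro sum.cong) auto
    with \<open>\<alpha> \<in> exps_box M\<close> show ?thesis by (simp add: sum.delta')
  qed
qed

lemma box_poly_zero: "box_poly M (\<lambda>v. 0)"
  unfolding box_poly_def by (rule exI[of _ "\<lambda>_. 0"]) simp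

lemma box_poly_add:
  assumes "box_poly M f" "box_poly M g"
  shows "box_poly M (\<lambda>v. f v + g v)"
proof -
  obtain c d where "\<forall>v. f v = (\<Sum>\<alpha>\<in>exps_box M. c \<alpha> * vmonom \<alpha> v)"
    "\<forall>v. g v = (\<Sum>\<alpha>\<in>exps_box M. d \<alpha> * vmonom \<alpha> v)"
    using assms unfolding box_poly_def by blast
  then show ?thesis unfolding box_poly_def
    by (intro exI[of _ "\<lambda>\<alpha>. c \<alpha> + d \<alpha>"]) (simp add: distrib_right sum.distrib)
qed

lemma box_poly_scale:
  assumes "box_poly M f"
  shows "box_poly M (\<lambda>v. r * f v)"
proof -
  obtain c where "\<forall>v. f v = (\<Sum>\<alpha>\<in>exps_box M. c \<alpha> * vmonom \<alpha> v)"
    using assms unfolding box_poly_def by blast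
  then show ?thesis unfolding box_poly_def
    by (intro exI[of _ "\<lambda>\<alpha>. r * c \<alpha>"]) (simp add: sum_distrib_left mult_ac)
qed

lemma box_poly_sum:
  "finite I \<Longrightarrow> (\<And>i. i \<in> I \<Longrightarrow> box_poly M (h i)) \<Longrightarrow> box_poly M (\<lambda>v. \<Sum>i\<in>I. h i v)"
  by (induction I rule: finite_induct) (auto intro: box_poly_add box_poly_zero)

lemma box_poly_const: "box_poly M (\<lambda>v. r)"
  using box_poly_scale[OF box_poly_vmonom[of "\<lambda>_. 0" M], of r]
  by (simp add: exps_box_def vmonom_zero)

lemma box_poly_mono:
  assumes "M \<le> M'" "box_poly M f"
  shows "box_poly M' f"
proof -
  obtain c where c: "\<forall>v. f v = (\<Sum>\<alpha>\<in>exps_box M. c \<alpha> * vmonom \<alpha> v)"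
    using assms(2) unfolding box_poly_def by blast
  have sub: "exps_box M \<subseteq> exps_box M'" using assms(1) by (auto simp: exps_box_def intro: order_trans)
  have "f v = (\<Sum>\<alpha>\<in>exps_box M'. (if \<alpha> \<in> exps_box M then c \<alpha> else 0) * vmonom \<alpha> v)" for v
    unfolding c[rule_format] using sub by (intro sum.mono_neutral_cong_left) auto
  then show ?thesis unfolding box_poly_def by (intro exI allI)
qed

lemma box_poly_mult:
  assumes "box_poly M f" "box_poly M' g"
  shows "box_poly (M + M') (\<lambda>v. f v * g v)"
proof -
  obtain c d where c: "\<forall>v. f v = (\<Sum>\<alpha>\<in>exps_box M. c \<alpha> * vmonom \<alpha> v)"
    and d: "\<forall>v. g v = (\<Sum>\<beta>\<in>exps_box M'. d \<beta> * vmonom \<beta> v)"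
    using assms unfolding box_poly_def by blast
  have eq: "f v * g v = (\<Sum>\<alpha>\<in>exps_box M. \<Sum>\<beta>\<in>exps_box M'. (c \<alpha> * d \<beta>) * vmonom (\<lambda>i. \<alpha> i + \<beta> i) v)" for v
    unfolding c[rule_format] d[rule_format] sum_product
    by (intro sum.cong refl) (simp add: vmonom_mult[symmetric] mult_ac)
  have "box_poly (M + M') (\<lambda>v. \<Sum>\<alpha>\<in>exps_box M. \<Sum>\<beta>\<in>exps_box M'. (c \<alpha> * d \<beta>) * vmonom (\<lambda>i. \<alpha> i + \<beta> i) v)"
    by (intro box_poly_sum box_poly_scale box_poly_vmonom finite_exps_box)
      (auto simp: exps_box_def add_mono)
  then show ?thesis using eq by simp
qed

lemma box_poly_annihilated:
  assumes "\<forall>\<alpha>\<in>exps_box M. (\<Sum>z\<in>Z. w z * vmonom \<alpha> (v z)) = 0" "box_poly M h"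
  shows "(\<Sum>z\<in>Z. w z * h (v z)) = 0"
proof -
  obtain c where c: "\<forall>v. h v = (\<Sum>\<alpha>\<in>exps_box M. c \<alpha> * vmonom \<alpha> v)"
    using assms(2) unfolding box_poly_def by blast
  have "(\<Sum>z\<in>Z. w z * h (v z)) = (\<Sum>\<alpha>\<in>exps_box M. c \<alpha> * (\<Sum>z\<in>Z. w z * vmonom \<alpha> (v z)))"
    unfolding c[rule_format] sum_distrib_left by (subst sum.swap) (simp add: mult_ac)
  then show ?thesis using assms(1) by simp
qed

definition cross_term :: "real^'n \<Rightarrow> real^'n \<Rightarrow> real" where
  "cross_term u v = (\<Sum>i\<in>UNIV. u$i * v$i - (v$i)\<^sup>2 / 2)"

lemma half_norm_diff_sq: "(norm (u - v))\<^sup>2 / 2 = (norm u)\<^sup>2 / 2 - cross_term u (v :: real^'n)"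
proof -
  have sq: "(norm w)\<^sup>2 = (\<Sum>i\<in>UNIV. (w$i)\<^sup>2)" for w :: "real^'n"
    by (simp add: norm_vec_def L2_set_def sum_nonneg)
  have "(norm (u - v))\<^sup>2 = (norm u)\<^sup>2 - 2 * (\<Sum>i\<in>UNIV. u$i * v$i) + (norm v)\<^sup>2"
    by (simp add: sq power2_diff sum_subtractf sum.distrib sum_distrib_left mult_ac)
  moreover have "cross_term u v = (\<Sum>i\<in>UNIV. u$i * v$i) - (\<Sum>i\<in>UNIV. (v$i)\<^sup>2) / 2"
    by (simp add: cross_term_def sum_subtractf sum_divide_distrib)
  ultimately show ?thesis using sq[of v] by linarith
qed

lemma box_poly_cross_term: "box_poly 2 (cross_term u)"
proof -
  have "box_poly 2 (\<lambda>v. \<Sum>i\<in>UNIV. u$i * vmonom (\<lambda>j. if j = i then 1 else 0) v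
        + (-1/2) * vmonom (\<lambda>j. if j = i then 2 else 0) v)"
    by (intro box_poly_sum box_poly_add box_poly_scale box_poly_vmonom) (auto simp: exps_box_def)
  then show ?thesis unfolding vmonom_axis by (simp add: cross_term_def[abs_def])
qed

lemma box_poly_exp_taylor_cross_term: "box_poly (2 * k) (\<lambda>v. \<Sum>n<k. (cross_term u v) ^ n / fact n)"
proof -
  have pow: "box_poly (2 * n) (\<lambda>v. (cross_term u v) ^ n)" for n
  proof (induction n)
    case 0 then show ?case using box_poly_const[of 0 1] by simp
  next
    case (Suc n) then show ?case using box_poly_mult[OF box_poly_cross_term Suc] by simp
  qed
  have "box_poly (2 * k) (\<lambda>v. \<Sum>n<k. (1 / fact n) * (cross_term u v) ^ n)"
    by (intro box_poly_sum box_poly_scale) (auto intro: box_poly_mono[OF _ pow])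
  then show ?thesis by simp
qed

section \<open>Gaussian sums with vanishing moments\<close>

lemma abs_exp_minus_taylor_le:
  fixes t :: real
  shows "\<bar>exp t - (\<Sum>n<k. t ^ n / fact n)\<bar> \<le> \<bar>t\<bar> ^ k / fact k * exp \<bar>t\<bar>"
proof -
  obtain s where s: "\<bar>s\<bar> \<le> \<bar>t\<bar>" "exp t = (\<Sum>m<k. t ^ m / fact m) + exp s / fact k * t ^ k"
    using Maclaurin_exp_le[of t k] by blast
  have "\<bar>exp t - (\<Sum>n<k. t ^ n / fact n)\<bar> = exp s / fact k * \<bar>t\<bar> ^ k"
    using s(2) by (simp add: abs_mult power_abs)
  also have "\<dots> \<le> exp \<bar>t\<bar> / fact k * \<bar>t\<bar> ^ k"
    using s(1) by (intro mult_right_mono divide_right_mono) auto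
  finally show ?thesis by (simp add: mult.commute)
qed

lemma pow_div_fact_le_exp:
  fixes x :: real
  assumes "0 \<le> x"
  shows "x ^ k / fact k \<le> exp x"
proof -
  obtain s where "exp x = (\<Sum>m<Suc k. x ^ m / fact m) + exp s / fact (Suc k) * x ^ Suc k"
    using Maclaurin_exp_le[of x "Suc k"] by blast
  moreover have "x ^ k / fact k \<le> (\<Sum>m<Suc k. x ^ m / fact m)"
    by (rule member_le_sum[where f = "\<lambda>m. x ^ m / fact m"]) (use assms in auto)
  ultimately show ?thesis using assms by simp
qed

lemma pow_div_fact_le_exp_neg:
  fixes s L d :: real
  assumes s: "0 \<le> s" "s \<le> 4 * d * L" and L: "L \<ge> 1" and d: "d \<ge> 1"
    and k: "real k \<ge> 4 * d * exp 2 * L"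
  shows "s ^ k / fact k \<le> exp (- L)"
proof -
  have "1 * 1 \<le> d * exp 2" using d by (intro mult_mono) auto
  then have L_le: "L \<le> 4 * d * exp 2 * L" using L mult_right_mono[of 1 "4 * d * exp 2" L] by simp
  then have k_pos: "real k > 0" using k L by linarith
  have "s / real k \<le> (4 * d * L) / (4 * d * exp 2 * L)"
    using s k k_pos L d by (intro frac_le) auto
  also have "\<dots> = exp (-2)" using L d by (simp add: exp_minus field_simps)
  finally have ratio: "s / real k \<le> exp (-2)" .
  have "s ^ k / fact k = (s / real k) ^ k * (real k ^ k / fact k)"
    using k_pos by (simp add: power_divide)
  also have "\<dots> \<le> exp (-2) ^ k * exp (real k)"
    using ratio s k_pos by (intro mult_mono power_mono pow_div_fact_le_exp) auto
  also have "\<dots> = exp (- real k)" by (simp add: exp_of_nat_mult[symmetric] exp_add[symmetric])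
  also have "\<dots> \<le> exp (- L)" using k L_le by simp
  finally show ?thesis .
qed

lemma norm_le_half_card:
  assumes "\<forall>i. \<bar>v$i\<bar> \<le> 1/2"
  shows "norm (v :: real^'n) \<le> real CARD('n) / 2"
proof -
  have "norm v \<le> (\<Sum>i\<in>UNIV. \<bar>v$i\<bar>)" by (rule norm_le_l1_cart)
  also have "\<dots> \<le> (\<Sum>i\<in>(UNIV :: 'n set). 1/2)" using assms by (intro sum_mono) auto
  finally show ?thesis by simp
qed

lemma abs_cross_term_le:
  assumes "\<forall>i. \<bar>v$i\<bar> \<le> 1/2"
  shows "\<bar>cross_term u (v :: real^'n)\<bar> \<le> real CARD('n) * (norm u + 1)"
proof -
  have "\<bar>u$i * v$i - (v$i)\<^sup>2 / 2\<bar> \<le> norm u + 1" for i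
  proof -
    have vi: "\<bar>v$i\<bar> \<le> 1/2" using assms by auto
    have "\<bar>u$i * v$i\<bar> \<le> norm u * 1"
      unfolding abs_mult using component_le_norm_cart[of u i] vi by (intro mult_mono) auto
    moreover have "(v$i)\<^sup>2 \<le> 1" using vi abs_le_square_iff[of "v$i" 1] by simp
    ultimately show ?thesis using zero_le_power2[of "v$i"] unfolding abs_le_iff by linarith
  qed
  then have "\<bar>cross_term u v\<bar> \<le> (\<Sum>i\<in>(UNIV :: 'n set). norm u + 1)"
    unfolding cross_term_def by (intro order_trans[OF sum_abs] sum_mono)
  then show ?thesis by simp
qed

lemma exp_half_sq_far_le:
  assumes v: "\<forall>i. \<bar>v$i\<bar> \<le> 1/2" and far: "8 * L \<le> (norm u)\<^sup>2"
  shows "exp (- (norm (u - v))\<^sup>2 / 2)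
    \<le> exp ((real CARD('n))\<^sup>2 + real CARD('n)) * exp (- L) * exp (- (norm (u :: real^'n))\<^sup>2 / 8)"
proof -
  define d where "d = real CARD('n)"
  have "(norm v)\<^sup>2 \<le> (d/2)\<^sup>2"
    using norm_le_half_card[OF v] by (intro power_mono) (auto simp: d_def)
  then have "(norm v)\<^sup>2 \<le> d\<^sup>2 / 4" by (simp add: power_divide)
  moreover have "(norm u)\<^sup>2 \<le> 2 * (norm (u - v))\<^sup>2 + 2 * (norm v)\<^sup>2"
  proof -
    have "norm u \<le> norm (u - v) + norm v" using norm_triangle_sub[of u v] by simp
    then have "(norm u)\<^sup>2 \<le> (norm (u - v) + norm v)\<^sup>2" by (intro power_mono) auto
    moreover have "(norm (u - v) + norm v)\<^sup>2 + (norm (u - v) - norm v)\<^sup>2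
        = 2 * (norm (u - v))\<^sup>2 + 2 * (norm v)\<^sup>2"
      by (simp add: power2_eq_square algebra_simps)
    ultimately show ?thesis using zero_le_power2[of "norm (u - v) - norm v"] by linarith
  qed
  moreover have "d \<ge> 0" by (simp add: d_def)
  ultimately have "- (norm (u - v))\<^sup>2 / 2 \<le> d\<^sup>2 + d + (- L) + (- (norm u)\<^sup>2 / 8)"
    using far zero_le_power2[of d] by linarith
  then have "exp (- (norm (u - v))\<^sup>2 / 2) \<le> exp (d\<^sup>2 + d + (- L) + (- (norm u)\<^sup>2 / 8))"
    by (rule exp_mono)
  then show ?thesis by (simp only: exp_add d_def)
qed

lemma exp_cross_term_taylor_remainder_le:
  assumes v: "\<forall>i. \<bar>v$i\<bar> \<le> 1/2" and L: "L \<ge> 1" and near: "norm u \<le> 3 * L"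
    and k: "real k \<ge> 4 * real CARD('n) * exp 2 * L"
  shows "\<bar>exp (cross_term u v) - (\<Sum>n<k. (cross_term u v) ^ n / fact n)\<bar>
    \<le> exp (- L) * exp (real CARD('n) * (norm (u :: real^'n) + 1))"
proof -
  define s where "s = real CARD('n) * (norm u + 1)"
  have "s \<le> real CARD('n) * (4 * L)" unfolding s_def using near L by (intro mult_left_mono) auto
  then have rem: "s ^ k / fact k \<le> exp (- L)"
    using L k by (intro pow_div_fact_le_exp_neg[of s "real CARD('n)"]) (auto simp: s_def)
  have c: "\<bar>cross_term u v\<bar> \<le> s" unfolding s_def by (rule abs_cross_term_le[OF v])
  have "\<bar>exp (cross_term u v) - (\<Sum>n<k. (cross_term u v) ^ n / fact n)\<bar>
      \<le> \<bar>cross_term u v\<bar> ^ k / fact k * exp \<bar>cross_term u v\<bar>"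
    by (rule abs_exp_minus_taylor_le)
  also have "\<dots> \<le> s ^ k / fact k * exp s"
    using c by (intro mult_mono divide_right_mono power_mono) auto
  also have "\<dots> \<le> exp (- L) * exp s" using rem by (intro mult_right_mono) auto
  finally show ?thesis by (simp add: s_def)
qed

lemma exp_neg_half_sq_mult_exp_le:
  fixes d r :: real
  shows "exp (- r\<^sup>2 / 2) * exp (d * (r + 1)) \<le> exp (d\<^sup>2 + d) * exp (- r\<^sup>2 / 8)"
proof -
  have "d * r \<le> r\<^sup>2 / 4 + d\<^sup>2"
    using zero_le_power2[of "r / 2 - d"] by (simp add: power2_eq_square field_simps)
  then have "- r\<^sup>2 / 2 + (d * r + d) \<le> d\<^sup>2 + d + - r\<^sup>2 / 8"
    using zero_le_power2[of r] by linarith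
  then show ?thesis unfolding exp_add[symmetric] by (simp add: distrib_left)
qed

text \<open>Expand \<open>exp(-|u - v|\<^sup>2/2) = exp(-|u|\<^sup>2/2) exp(cross_term u v)\<close>: the Taylor polynomial of the
  second factor is killed by the moment conditions, leaving only the remainder.\<close>

lemma moment_matched_gauss_sum_near_le:
  fixes u :: "real^'n" and v :: "'z \<Rightarrow> real^'n" and w :: "'z \<Rightarrow> real"
  assumes v: "\<forall>z\<in>Z. \<forall>i. \<bar>v z $ i\<bar> \<le> 1/2" and near: "(norm u)\<^sup>2 < 8 * L"
    and L: "L \<ge> 1" and k: "real k \<ge> 4 * real CARD('n) * exp 2 * L"
    and moments: "\<forall>\<alpha>\<in>exps_box (2 * k). (\<Sum>z\<in>Z. w z * vmonom \<alpha> (v z)) = 0"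
  shows "\<bar>\<Sum>z\<in>Z. w z * exp (- (norm (u - v z))\<^sup>2 / 2)\<bar>
     \<le> (\<Sum>z\<in>Z. \<bar>w z\<bar>) * exp ((real CARD('n))\<^sup>2 + real CARD('n)) * exp (- L) * exp (- (norm u)\<^sup>2 / 8)"
proof -
  define d where "d = real CARD('n)"
  define T where "T x = (\<Sum>n<k. x ^ n / fact n)" for x :: real
  have "norm u \<le> 3 * L"
  proof (rule power2_le_imp_le)
    have "8 * L \<le> (9 * L) * L" using L by (intro mult_right_mono) auto
    moreover have "(3 * L)\<^sup>2 = (9 * L) * L" by (simp add: power2_eq_square)
    ultimately show "(norm u)\<^sup>2 \<le> (3 * L)\<^sup>2" using near by linarith
  qed (use L in simp)
  then have remainder: "\<bar>exp (cross_term u (v z)) - T (cross_term u (v z))\<bar> \<le> exp (- L) * exp (d * (norm u + 1))"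
    if "z \<in> Z" for z
    unfolding T_def d_def using that v L k by (intro exp_cross_term_taylor_remainder_le) auto
  have "(\<Sum>z\<in>Z. w z * T (cross_term u (v z))) = 0"
    unfolding T_def using box_poly_annihilated[OF moments box_poly_exp_taylor_cross_term] by simp
  moreover have "exp (- (norm (u - v z))\<^sup>2 / 2) = exp (- (norm u)\<^sup>2 / 2) * exp (cross_term u (v z))" for z
    using half_norm_diff_sq[of u "v z"] by (simp add: exp_add[symmetric])
  ultimately have "(\<Sum>z\<in>Z. w z * exp (- (norm (u - v z))\<^sup>2 / 2))
      = exp (- (norm u)\<^sup>2 / 2) * (\<Sum>z\<in>Z. w z * (exp (cross_term u (v z)) - T (cross_term u (v z))))"
    by (simp add: sum_distrib_left sum_distrib_right sum_subtractf right_diff_distrib mult_ac)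
  then have "\<bar>\<Sum>z\<in>Z. w z * exp (- (norm (u - v z))\<^sup>2 / 2)\<bar>
      = exp (- (norm u)\<^sup>2 / 2) * \<bar>\<Sum>z\<in>Z. w z * (exp (cross_term u (v z)) - T (cross_term u (v z)))\<bar>"
    by (simp add: abs_mult)
  also have "\<dots> \<le> exp (- (norm u)\<^sup>2 / 2) * (\<Sum>z\<in>Z. \<bar>w z\<bar> * (exp (- L) * exp (d * (norm u + 1))))"
    using remainder by (intro mult_left_mono order_trans[OF sum_abs] sum_mono) (auto simp: abs_mult mult_left_mono)
  also have "\<dots> = (\<Sum>z\<in>Z. \<bar>w z\<bar>) * exp (- L) * (exp (- (norm u)\<^sup>2 / 2) * exp (d * (norm u + 1)))"
    by (simp only: sum_distrib_right[symmetric]) (simp add: mult_ac)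
  also have "\<dots> \<le> (\<Sum>z\<in>Z. \<bar>w z\<bar>) * exp (- L) * (exp (d\<^sup>2 + d) * exp (- (norm u)\<^sup>2 / 8))"
    by (intro mult_left_mono exp_neg_half_sq_mult_exp_le) (auto simp: sum_nonneg)
  finally show ?thesis by (simp add: d_def mult_ac)
qed

lemma moment_matched_gauss_sum_le:
  fixes u :: "real^'n" and v :: "'z \<Rightarrow> real^'n" and w :: "'z \<Rightarrow> real"
  assumes v: "\<forall>z\<in>Z. \<forall>i. \<bar>v z $ i\<bar> \<le> 1/2"
    and L: "L \<ge> 1" and k: "real k \<ge> 4 * real CARD('n) * exp 2 * L"
    and moments: "\<forall>\<alpha>\<in>exps_box (2 * k). (\<Sum>z\<in>Z. w z * vmonom \<alpha> (v z)) = 0"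
  shows "\<bar>\<Sum>z\<in>Z. w z * exp (- (norm (u - v z))\<^sup>2 / 2)\<bar>
     \<le> (\<Sum>z\<in>Z. \<bar>w z\<bar>) * exp ((real CARD('n))\<^sup>2 + real CARD('n)) * exp (- L) * exp (- (norm u)\<^sup>2 / 8)"
proof (cases "8 * L \<le> (norm u)\<^sup>2")
  case True
  have "\<bar>\<Sum>z\<in>Z. w z * exp (- (norm (u - v z))\<^sup>2 / 2)\<bar> \<le> (\<Sum>z\<in>Z. \<bar>w z\<bar> * exp (- (norm (u - v z))\<^sup>2 / 2))"
    by (rule order_trans[OF sum_abs]) (simp add: abs_mult)
  also have "\<dots> \<le> (\<Sum>z\<in>Z. \<bar>w z\<bar> * (exp ((real CARD('n))\<^sup>2 + real CARD('n)) * exp (- L) * exp (- (norm u)\<^sup>2 / 8)))"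
    using exp_half_sq_far_le[OF _ True] v by (intro sum_mono mult_left_mono) auto
  finally show ?thesis by (simp add: sum_distrib_right mult.assoc)
next
  case False
  then show ?thesis by (intro moment_matched_gauss_sum_near_le[OF v _ L k moments]) simp
qed

lemma gauss_dens_nonneg: "0 \<le> gauss_dens s y"
  by (simp add: gauss_dens_def)

lemma borel_measurable_gauss_dens [measurable]: "gauss_dens s \<in> borel_measurable borel"
  unfolding gauss_dens_def[abs_def] by measurable

lemma gauss_dens_eq_prod_normal_density:
  fixes x c :: "real^'n"
  assumes s: "s > 0"
  shows "gauss_dens s (x - c) = (\<Prod>b\<in>Basis. normal_density (c \<bullet> b) s (x \<bullet> b))"
proof -
  define A where "A = 2 * pi * s\<^sup>2"
  have "(\<Prod>b\<in>Basis. normal_density (c \<bullet> b) s (x \<bullet> b))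
      = (\<Prod>b\<in>(Basis :: (real^'n) set). 1 / sqrt A) * (\<Prod>b\<in>Basis. exp (- (x \<bullet> b - c \<bullet> b)\<^sup>2 / (2 * s\<^sup>2)))"
    unfolding normal_density_def prod.distrib A_def by simp
  also have "(\<Prod>b\<in>Basis. exp (- (x \<bullet> b - c \<bullet> b)\<^sup>2 / (2 * s\<^sup>2))) = exp (- (norm (x - c))\<^sup>2 / (2 * s\<^sup>2))"
  proof -
    have "(norm (x - c))\<^sup>2 = (\<Sum>b\<in>Basis. ((x - c) \<bullet> b)\<^sup>2)"
      unfolding power2_norm_eq_inner by (subst euclidean_inner) (simp add: power2_eq_square)
    then show ?thesis by (simp add: exp_sum sum_divide_distrib inner_diff_left flip: sum_negf)
  qed
  also have "(\<Prod>b\<in>(Basis :: (real^'n) set). 1 / sqrt A) = A powr (- real CARD('n) / 2)"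
  proof -
    have "A powr (- real CARD('n) / 2) = (A powr (1/2)) powr (- real CARD('n))"
      by (simp add: powr_powr)
    also have "\<dots> = (1 / sqrt A) ^ CARD('n)"
      using s by (simp add: A_def powr_minus powr_half_sqrt powr_realpow power_one_over inverse_eq_divide)
    finally show ?thesis by simp
  qed
  finally show ?thesis by (simp add: gauss_dens_def A_def)
qed

lemma nn_integral_gauss_dens_shift:
  fixes c :: "real^'n"
  assumes s: "s > 0"
  shows "(\<integral>\<^sup>+x. ennreal (gauss_dens s (x - c)) \<partial>lborel) = 1"
proof -
  have "(\<integral>\<^sup>+x. ennreal (gauss_dens s (x - c)) \<partial>lborel)
      = (\<integral>\<^sup>+x. (\<Prod>b\<in>Basis. ennreal (normal_density (c \<bullet> b) s (x \<bullet> b))) \<partial>lborel)"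
    using s by (simp add: gauss_dens_eq_prod_normal_density prod_ennreal normal_density_nonneg)
  also have "\<dots> = (\<Prod>b\<in>(Basis :: (real^'n) set). (\<integral>\<^sup>+x. ennreal (normal_density (c \<bullet> b) s x) \<partial>lborel))"
    by (rule nn_integral_lborel_prod) auto
  also have "\<dots> = 1"
    using s by (simp add: nn_integral_eq_integral normal_density_nonneg)
  finally show ?thesis .
qed

lemma gauss_dens_le:
  assumes s: "s > 0"
  shows "gauss_dens s (y :: real^'n) \<le> 1 / s ^ CARD('n)"
proof -
  define n where "n = real CARD('n)"
  have pi_factor: "(2 * pi) powr (- n / 2) \<le> 1"
    using pi_gt3 powr_mono[of "- n / 2" 0 "2 * pi"] by (simp add: n_def)
  have s_factor: "(s\<^sup>2) powr (- n / 2) = 1 / s ^ CARD('n)"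
  proof -
    have "(s\<^sup>2) powr (- n / 2) = (s powr 2) powr (- n / 2)" using s by (simp add: powr_realpow)
    also have "\<dots> = inverse (s powr n)" by (simp add: powr_powr powr_minus)
    finally show ?thesis using s by (simp add: n_def powr_realpow inverse_eq_divide)
  qed
  have "(2 * pi * s\<^sup>2) powr (- n / 2) = (2 * pi) powr (- n / 2) * (s\<^sup>2) powr (- n / 2)"
    by (rule powr_mult)
  then have "(2 * pi * s\<^sup>2) powr (- n / 2) \<le> 1 / s ^ CARD('n)"
    using mult_right_mono[OF pi_factor, of "1 / s ^ CARD('n)"] s s_factor by simp
  moreover have "gauss_dens s y \<le> (2 * pi * s\<^sup>2) powr (- n / 2)"
    unfolding gauss_dens_def n_def by (intro mult_right_le_one_le) auto
  ultimately show ?thesis by linarith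
qed

lemma gauss_dens_eq_exp_scaled:
  assumes s: "s > 0"
  shows "gauss_dens s w = (2 * pi * s\<^sup>2) powr (- real CARD('n) / 2) * exp (- (norm ((1/s) *\<^sub>R (w :: real^'n)))\<^sup>2 / 2)"
  using s by (simp add: gauss_dens_def power_divide)

lemma gauss_dens_double_scale:
  assumes s: "s > 0"
  shows "(2 * pi * s\<^sup>2) powr (- real CARD('n) / 2) * exp (- (norm ((1/s) *\<^sub>R (w :: real^'n)))\<^sup>2 / 8)
       = 2 ^ CARD('n) * gauss_dens (2 * s) w"
proof -
  define n where "n = real CARD('n)"
  have "(2 * pi * (2 * s)\<^sup>2) = 4 * (2 * pi * s\<^sup>2)" by (simp add: power2_eq_square)
  then have "(2 * pi * (2 * s)\<^sup>2) powr (- n / 2) = 4 powr (- n / 2) * (2 * pi * s\<^sup>2) powr (- n / 2)"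
    by (simp only: powr_mult)
  moreover have "(4::real) powr (- n / 2) = 1 / 2 ^ CARD('n)"
  proof -
    have "(4::real) powr (- n / 2) = (2 powr 2) powr (- n / 2)" by simp
    also have "\<dots> = inverse (2 powr n)" by (simp add: powr_powr powr_minus)
    finally show ?thesis by (simp add: n_def powr_realpow inverse_eq_divide)
  qed
  ultimately show ?thesis
    using s by (simp add: gauss_dens_def power_divide power2_eq_square n_def)
qed

section \<open>Rounding to the grid\<close>

definition clamp_round :: "real \<Rightarrow> int \<Rightarrow> real \<Rightarrow> int" where
  "clamp_round h N t = max (- (N - 1)) (min (N - 1) \<lfloor>t / h\<rfloor>)"

definition grid_round :: "real \<Rightarrow> int \<Rightarrow> real^'n \<Rightarrow> real^'n" where
  "grid_round h N z = (\<chi> i. real_of_int (clamp_round h N (z$i)) * h)"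

lemma clamp_round_err:
  assumes h: "h > 0" and a: "a > 0" and t: "\<bar>t\<bar> \<le> a"
  shows "\<bar>t - real_of_int (clamp_round h \<lceil>a / h\<rceil> t) * h\<bar> \<le> h"
proof -
  define N where "N = \<lceil>a / h\<rceil>"
  define f where "f = \<lfloor>t / h\<rfloor>"
  have "real_of_int f \<le> t / h" "t / h < real_of_int f + 1" unfolding f_def by linarith+
  then have f: "real_of_int f * h \<le> t" "t < (real_of_int f + 1) * h"
    using h by (simp_all add: field_simps)
  have "a / h \<le> real_of_int N" "real_of_int N < a / h + 1" unfolding N_def by linarith+
  then have N: "a \<le> real_of_int N * h" "(real_of_int N - 1) * h < a"
    using h by (simp_all add: field_simps)
  have N1: "N \<ge> 1" using a h by (simp add: N_def)
  have ta: "t \<le> a" "- a \<le> t" using t by auto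
  have "\<bar>t - real_of_int (clamp_round h N t) * h\<bar> \<le> h"
  proof (cases "f > N - 1")
    case True
    then have r: "clamp_round h N t = N - 1" using N1 by (simp add: clamp_round_def f_def)
    have "real_of_int N * h \<le> real_of_int f * h" using True h by (intro mult_right_mono) auto
    then have "t - real_of_int N * h + h \<le> h" "- (t - real_of_int N * h + h) \<le> h"
      using f N ta h by linarith+
    moreover have "t - real_of_int (N - 1) * h = t - real_of_int N * h + h" by (simp add: algebra_simps)
    ultimately show ?thesis unfolding r abs_le_iff by simp
  next
    case not_above: False
    show ?thesis
    proof (cases "f < - (N - 1)")
      case True
      then have r: "clamp_round h N t = - (N - 1)" using N1 by (simp add: clamp_round_def f_def)
      have "(real_of_int f + 1) * h \<le> - (real_of_int N - 1) * h"
        using True h by (intro mult_right_mono) auto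
      moreover have "- (real_of_int N - 1) * h = h - real_of_int N * h" by (simp add: algebra_simps)
      ultimately have "t + real_of_int N * h - h \<le> h" "- (t + real_of_int N * h - h) \<le> h"
        using f N ta h by linarith+
      moreover have "t - real_of_int (- (N - 1)) * h = t + real_of_int N * h - h"
        by (simp add: algebra_simps)
      ultimately show ?thesis unfolding r abs_le_iff by simp
    next
      case False
      then have "clamp_round h N t = f" using not_above by (simp add: clamp_round_def f_def)
      then show ?thesis using f by (simp add: abs_le_iff algebra_simps)
    qed
  qed
  then show ?thesis by (simp add: N_def)
qed

lemma grid_round_err:
  assumes "\<sigma> > 0" "\<epsilon> > 0" "a > 0" "z \<in> cube a"
  shows "\<bar>(z - grid_round (\<sigma> * \<epsilon>) \<lceil>a / (\<sigma> * \<epsilon>)\<rceil> z) $ i\<bar> \<le> \<sigma> * \<epsilon>"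
  using assms clamp_round_err[of "\<sigma> * \<epsilon>" a "z$i"] by (simp add: grid_round_def cube_def)

lemma abs_clamp_round_less: "N \<ge> 1 \<Longrightarrow> \<bar>clamp_round h N t\<bar> < N"
  by (auto simp: clamp_round_def)

lemma grid_round_in_grid:
  assumes "\<sigma> > 0" "\<epsilon> > 0" "a > 0"
  shows "grid_round (\<sigma> * \<epsilon>) \<lceil>a / (\<sigma> * \<epsilon>)\<rceil> z \<in> grid a \<sigma> \<epsilon>"
proof -
  have "\<lceil>a / (\<sigma> * \<epsilon>)\<rceil> \<ge> 1" using assms by simp
  then show ?thesis unfolding grid_def grid_round_def
    by (intro CollectI exI[of _ "\<lambda>i. clamp_round (\<sigma> * \<epsilon>) \<lceil>a / (\<sigma> * \<epsilon>)\<rceil> (z$i)"])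
      (simp add: abs_clamp_round_less mult.assoc)
qed

lemma borel_measurable_grid_round [measurable]: "grid_round h N \<in> borel_measurable borel"
proof (subst borel_measurable_euclidean_space, intro ballI)
  fix b :: "real^'n" assume "b \<in> Basis"
  then obtain i where b: "b = axis i 1" by (auto simp: Basis_vec_def)
  have "(\<lambda>z::real^'n. clamp_round h N (z$i)) \<in> measurable borel (count_space UNIV)"
    unfolding clamp_round_def by measurable
  then have "(\<lambda>z::real^'n. real_of_int (clamp_round h N (z$i)) * h) \<in> borel_measurable borel"
    by measurable
  then show "(\<lambda>z. grid_round h N z \<bullet> b) \<in> borel_measurable borel"
    by (simp add: b inner_axis grid_round_def)
qed

lemma finite_grid: "finite (grid a \<sigma> \<epsilon> :: (real^'n) set)"
proof -
  define N where "N = \<lceil>a / (\<sigma> * \<epsilon>)\<rceil>"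
  have "\<bar>k\<bar> < N \<longleftrightarrow> k \<in> {- (N - 1)..N - 1}" for k :: int by auto
  then have "{n :: 'n \<Rightarrow> int. \<forall>i. \<bar>n i\<bar> < N} = PiE UNIV (\<lambda>_. {- (N - 1)..N - 1})"
    unfolding PiE_UNIV_domain by (auto simp: Pi_def)
  then have fin: "finite {n :: 'n \<Rightarrow> int. \<forall>i. \<bar>n i\<bar> < N}" by (simp add: finite_PiE)
  have "(grid a \<sigma> \<epsilon> :: (real^'n) set) \<subseteq> (\<lambda>n. \<chi> i. real_of_int (n i) * \<sigma> * \<epsilon>) ` {n. \<forall>i. \<bar>n i\<bar> < N}"
  proof
    fix x :: "real^'n" assume "x \<in> grid a \<sigma> \<epsilon>"
    then obtain n where "\<forall>i. \<bar>n i\<bar> < N \<and> x $ i = real_of_int (n i) * \<sigma> * \<epsilon>"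
      unfolding grid_def N_def by blast
    then show "x \<in> (\<lambda>n. \<chi> i. real_of_int (n i) * \<sigma> * \<epsilon>) ` {n. \<forall>i. \<bar>n i\<bar> < N}"
      by (intro image_eqI[of _ _ n]) (auto simp: vec_eq_iff)
  qed
  then show ?thesis using fin by (rule finite_subset[OF _ finite_imageI])
qed

lemma grid_subset_cube:
  assumes "\<sigma> > 0" "\<epsilon> > 0"
  shows "grid a \<sigma> \<epsilon> \<subseteq> cube a"
proof
  fix x :: "real^'n" assume "x \<in> grid a \<sigma> \<epsilon>"
  then obtain n where n: "\<And>i. \<bar>n i\<bar> < \<lceil>a / (\<sigma> * \<epsilon>)\<rceil>" "\<And>i. x $ i = real_of_int (n i) * \<sigma> * \<epsilon>"
    unfolding grid_def by blast
  have "\<bar>x $ i\<bar> \<le> a" for i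
  proof -
    have "\<bar>real_of_int (n i)\<bar> \<le> a / (\<sigma> * \<epsilon>)" using n(1)[of i] by linarith
    then show ?thesis using assms by (simp add: n(2) abs_mult field_simps)
  qed
  then show "x \<in> cube a" by (simp add: cube_def)
qed

section \<open>Moving the centre of a Gaussian\<close>

lemma abs_exp_neg_diff_le:
  fixes A B :: real
  shows "\<bar>exp (- A) - exp (- B)\<bar> \<le> \<bar>A - B\<bar> * exp (- min A B)"
proof -
  have key: "exp (- A) - exp (- B) \<le> (B - A) * exp (- A)" for A B :: real
  proof -
    have "1 - exp (- (B - A)) \<le> B - A" using exp_ge_add_one_self[of "A - B"] by (simp; linarith)
    then have "exp (- A) * (1 - exp (- (B - A))) \<le> exp (- A) * (B - A)" by (intro mult_left_mono) auto
    then show ?thesis by (simp add: right_diff_distrib mult.commute flip: exp_add)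
  qed
  show ?thesis
  proof (cases "A \<le> B")
    case True
    then show ?thesis using key[of A B] by (simp add: min_def)
  next
    case False
    then show ?thesis using key[of B A] by (simp add: min_def abs_minus_commute)
  qed
qed

lemma mult_exp_neg_sq_le: fixes t :: real shows "t * exp (- t\<^sup>2 / 8) \<le> 2"
proof -
  have "t \<le> 2 * (1 + t\<^sup>2 / 8)" using zero_le_power2[of "t - 2"] by (simp add: power2_eq_square algebra_simps)
  also have "\<dots> \<le> 2 * exp (t\<^sup>2 / 8)" using exp_ge_add_one_self[of "t\<^sup>2 / 8"] by (intro mult_left_mono) auto
  finally have "t * exp (- t\<^sup>2 / 8) \<le> 2 * exp (t\<^sup>2 / 8) * exp (- t\<^sup>2 / 8)" by (rule mult_right_mono) auto
  also have "\<dots> = 2" by (simp flip: exp_add)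
  finally show ?thesis .
qed

lemma half_sq_diff_bounds:
  fixes s t E :: real
  assumes "0 \<le> s" "0 \<le> t" "\<bar>s - t\<bar> \<le> E"
  shows "\<bar>t\<^sup>2 / 2 - s\<^sup>2 / 2\<bar> \<le> E * (2 * t + E) / 2"
    and "t\<^sup>2 / 4 - E\<^sup>2 / 2 \<le> min (t\<^sup>2 / 2) (s\<^sup>2 / 2)"
proof -
  have "t\<^sup>2 / 2 - s\<^sup>2 / 2 = (t - s) * (s + t) / 2" by (simp add: power2_eq_square algebra_simps)
  then have "\<bar>t\<^sup>2 / 2 - s\<^sup>2 / 2\<bar> = \<bar>t - s\<bar> * (s + t) / 2" using assms by (simp only:) (simp add: abs_mult)
  also have "\<dots> = \<bar>s - t\<bar> * (s + t) / 2" by (simp only: abs_minus_commute)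
  also have "\<dots> \<le> E * (2 * t + E) / 2" using assms by (intro divide_right_mono mult_mono) auto
  finally show "\<bar>t\<^sup>2 / 2 - s\<^sup>2 / 2\<bar> \<le> E * (2 * t + E) / 2" .
  have "t\<^sup>2 \<le> (s + E)\<^sup>2" using assms by (intro power_mono) auto
  moreover have "(s + E)\<^sup>2 + (s - E)\<^sup>2 = 2 * s\<^sup>2 + 2 * E\<^sup>2" by (simp add: power2_eq_square algebra_simps)
  ultimately have "t\<^sup>2 \<le> 2 * s\<^sup>2 + 2 * E\<^sup>2" using zero_le_power2[of "s - E"] by linarith
  then have "t\<^sup>2 / 4 - E\<^sup>2 / 2 \<le> t\<^sup>2 / 2" "t\<^sup>2 / 4 - E\<^sup>2 / 2 \<le> s\<^sup>2 / 2"
    using zero_le_power2[of E] zero_le_power2[of t] by linarith+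
  then show "t\<^sup>2 / 4 - E\<^sup>2 / 2 \<le> min (t\<^sup>2 / 2) (s\<^sup>2 / 2)" by simp
qed

lemma exp_half_sq_shift_le:
  fixes y \<delta> :: "real^'n"
  assumes \<delta>: "norm \<delta> \<le> real CARD('n) * \<epsilon>" and \<epsilon>: "0 \<le> \<epsilon>" "\<epsilon> \<le> 1"
  shows "\<bar>exp (- (norm y)\<^sup>2 / 2) - exp (- (norm (y + \<delta>))\<^sup>2 / 2)\<bar>
    \<le> real CARD('n) * (2 + real CARD('n) / 2) * exp ((real CARD('n))\<^sup>2 / 2) * \<epsilon> * exp (- (norm y)\<^sup>2 / 8)"
proof -
  define d t s E where "d = real CARD('n)" and "t = norm y" and "s = norm (y + \<delta>)" and "E = norm \<delta>"
  have d: "d \<ge> 1" and nonneg: "t \<ge> 0" "s \<ge> 0" "E \<ge> 0" by (auto simp: d_def t_def s_def E_def)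
  have "d * \<epsilon> \<le> d" using \<epsilon> d mult_left_mono[of \<epsilon> 1 d] by simp
  moreover have "E \<le> d * \<epsilon>" using \<delta> by (simp add: E_def d_def)
  ultimately have E: "E \<le> d * \<epsilon>" "E \<le> d" by linarith+
  have "\<bar>s - t\<bar> \<le> E" unfolding s_def t_def E_def
    using norm_triangle_ineq[of y \<delta>] norm_triangle_ineq[of "y + \<delta>" "- \<delta>"] by (simp add: abs_le_iff)
  note st = half_sq_diff_bounds[OF nonneg(2,1) this]
  have "\<bar>exp (- (t\<^sup>2 / 2)) - exp (- (s\<^sup>2 / 2))\<bar> \<le> \<bar>t\<^sup>2 / 2 - s\<^sup>2 / 2\<bar> * exp (- min (t\<^sup>2 / 2) (s\<^sup>2 / 2))"
    by (rule abs_exp_neg_diff_le)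
  also have "\<dots> \<le> (E * (2 * t + E) / 2) * exp (- (t\<^sup>2 / 4 - E\<^sup>2 / 2))"
    using st nonneg by (intro mult_mono) auto
  also have "\<dots> \<le> (d * \<epsilon> * (2 * t + d) / 2) * exp (d\<^sup>2 / 2 - t\<^sup>2 / 4)"
  proof (intro mult_mono)
    show "E * (2 * t + E) / 2 \<le> d * \<epsilon> * (2 * t + d) / 2"
      using E nonneg by (intro divide_right_mono mult_mono) auto
    have "E\<^sup>2 \<le> d\<^sup>2" using E nonneg by (intro power_mono) auto
    then show "exp (- (t\<^sup>2 / 4 - E\<^sup>2 / 2)) \<le> exp (d\<^sup>2 / 2 - t\<^sup>2 / 4)" by simp
  qed (use nonneg d \<epsilon> in auto)
  also have "\<dots> = d * \<epsilon> * exp (d\<^sup>2 / 2) * ((t + d / 2) * exp (- t\<^sup>2 / 4))"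
  proof -
    have "exp (d\<^sup>2 / 2 - t\<^sup>2 / 4) = exp (d\<^sup>2 / 2) * exp (- t\<^sup>2 / 4)" by (subst exp_add[symmetric]) simp
    then show ?thesis by (simp add: algebra_simps)
  qed
  also have "\<dots> \<le> d * \<epsilon> * exp (d\<^sup>2 / 2) * ((2 + d / 2) * exp (- t\<^sup>2 / 8))"
  proof (intro mult_left_mono)
    have "exp (- t\<^sup>2 / 4) = exp (- t\<^sup>2 / 8) * exp (- t\<^sup>2 / 8)" by (simp flip: exp_add)
    then have "t * exp (- t\<^sup>2 / 4) \<le> 2 * exp (- t\<^sup>2 / 8)"
      using mult_exp_neg_sq_le[of t] by (simp add: mult.assoc[symmetric] mult_right_mono)
    moreover have "d / 2 * exp (- t\<^sup>2 / 4) \<le> d / 2 * exp (- t\<^sup>2 / 8)" using d by (intro mult_left_mono) auto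
    ultimately show "(t + d / 2) * exp (- t\<^sup>2 / 4) \<le> (2 + d / 2) * exp (- t\<^sup>2 / 8)"
      by (simp add: algebra_simps)
  qed (use d \<epsilon> in auto)
  finally show ?thesis by (simp add: d_def t_def s_def mult_ac)
qed

definition shift_const :: "nat \<Rightarrow> real" where
  "shift_const d = 2 ^ d * real d * (2 + real d / 2) * exp ((real d)\<^sup>2 / 2)"

lemma shift_const_pos: "d \<ge> 1 \<Longrightarrow> shift_const d > 0"
  by (simp add: shift_const_def add_pos_nonneg)

lemma gauss_dens_shift_le:
  fixes x z z' :: "real^'n"
  assumes s: "s > 0" and \<epsilon>: "0 \<le> \<epsilon>" "\<epsilon> \<le> 1" and zz': "\<forall>i. \<bar>(z - z') $ i\<bar> \<le> s * \<epsilon>"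
  shows "\<bar>gauss_dens s (x - z) - gauss_dens s (x - z')\<bar> \<le> shift_const CARD('n) * \<epsilon> * gauss_dens (2 * s) (x - z)"
proof -
  define P where "P = (2 * pi * s\<^sup>2) powr (- real CARD('n) / 2)"
  define y \<delta> where "y = (1/s) *\<^sub>R (x - z)" and "\<delta> = (1/s) *\<^sub>R (z - z')"
  have "norm \<delta> \<le> (\<Sum>i\<in>UNIV. \<bar>\<delta>$i\<bar>)" by (rule norm_le_l1_cart)
  also have "\<dots> \<le> (\<Sum>i\<in>(UNIV :: 'n set). \<epsilon>)"
  proof (intro sum_mono)
    fix i
    have "\<bar>\<delta>$i\<bar> = \<bar>(z - z')$i\<bar> / s" using s by (simp add: \<delta>_def abs_mult)
    then show "\<bar>\<delta>$i\<bar> \<le> \<epsilon>" using zz' s by (simp add: divide_le_eq mult.commute)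
  qed
  finally have \<delta>_le: "norm \<delta> \<le> real CARD('n) * \<epsilon>" by simp
  have "(1/s) *\<^sub>R (x - z') = y + \<delta>" by (simp add: y_def \<delta>_def algebra_simps)
  then have "\<bar>gauss_dens s (x - z) - gauss_dens s (x - z')\<bar>
      = P * \<bar>exp (- (norm y)\<^sup>2 / 2) - exp (- (norm (y + \<delta>))\<^sup>2 / 2)\<bar>"
    unfolding gauss_dens_eq_exp_scaled[OF s] by (simp add: P_def y_def abs_mult flip: right_diff_distrib)
  also have "\<dots> \<le> P * (real CARD('n) * (2 + real CARD('n) / 2) * exp ((real CARD('n))\<^sup>2 / 2) * \<epsilon>
      * exp (- (norm y)\<^sup>2 / 8))"
    using exp_half_sq_shift_le[OF \<delta>_le \<epsilon>] by (intro mult_left_mono) (auto simp: P_def)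
  also have "\<dots> = real CARD('n) * (2 + real CARD('n) / 2) * exp ((real CARD('n))\<^sup>2 / 2) * \<epsilon>
      * (P * exp (- (norm y)\<^sup>2 / 8))"
    by (simp only: mult_ac)
  also have "P * exp (- (norm y)\<^sup>2 / 8) = 2 ^ CARD('n) * gauss_dens (2 * s) (x - z)"
    unfolding P_def y_def by (rule gauss_dens_double_scale[OF s])
  finally show ?thesis by (simp add: shift_const_def mult_ac)
qed

section \<open>Moment matching on cells\<close>

text \<open>Rescaling a cell of side \<open>s\<close> with centre \<open>c\<close> to the unit cube turns \<open>gauss_dens s (x - z)\<close> into
  \<open>exp(-|u - v|\<^sup>2/2)\<close> with \<open>u = (x - c)/s\<close>, \<open>v = (z - c)/s\<close>, and \<open>exp(-|u|\<^sup>2/8)\<close> into \<open>gauss_dens (2s) (x - c)\<close>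
  up to constants.\<close>

lemma cellwise_moment_matched_gauss_sum_le:
  fixes S :: "(real^'n) set" and cell :: "real^'n \<Rightarrow> 'c" and cen :: "'c \<Rightarrow> real^'n"
  assumes S: "finite S" and C: "finite C" and cell: "\<forall>z\<in>S. cell z \<in> C"
    and near: "\<forall>z\<in>S. \<forall>i. \<bar>(z - cen (cell z)) $ i\<bar> \<le> s / 2" and s: "s > 0"
    and L: "L \<ge> 1" and k: "real k \<ge> 4 * real CARD('n) * exp 2 * L"
    and moments: "\<forall>J\<in>C. \<forall>\<alpha>\<in>exps_box (2 * k).
      (\<Sum>z\<in>{z\<in>S. cell z = J}. w z * vmonom \<alpha> ((1/s) *\<^sub>R (z - cen J))) = 0"
  shows "\<bar>\<Sum>z\<in>S. w z * gauss_dens s (x - z)\<bar>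
     \<le> (\<Sum>J\<in>C. (\<Sum>z\<in>{z\<in>S. cell z = J}. \<bar>w z\<bar>) * exp ((real CARD('n))\<^sup>2 + real CARD('n)) * exp (- L)
            * (2 ^ CARD('n) * gauss_dens (2 * s) (x - cen J)))"
proof -
  define P where "P = (2 * pi * s\<^sup>2) powr (- real CARD('n) / 2)"
  have "\<bar>\<Sum>z\<in>{z\<in>S. cell z = J}. w z * gauss_dens s (x - z)\<bar>
     \<le> (\<Sum>z\<in>{z\<in>S. cell z = J}. \<bar>w z\<bar>) * exp ((real CARD('n))\<^sup>2 + real CARD('n)) * exp (- L)
            * (2 ^ CARD('n) * gauss_dens (2 * s) (x - cen J))" if J: "J \<in> C" for J
  proof -
    define Z where "Z = {z\<in>S. cell z = J}"
    define u where "u = (1/s) *\<^sub>R (x - cen J)"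
    define v where "v z = (1/s) *\<^sub>R (z - cen J)" for z
    have v: "\<forall>z\<in>Z. \<forall>i. \<bar>v z $ i\<bar> \<le> 1/2"
      using near s by (auto simp: Z_def v_def abs_mult divide_le_eq)
    have "(\<Sum>z\<in>Z. w z * gauss_dens s (x - z)) = P * (\<Sum>z\<in>Z. w z * exp (- (norm (u - v z))\<^sup>2 / 2))"
      unfolding sum_distrib_left gauss_dens_eq_exp_scaled[OF s]
      by (intro sum.cong refl) (simp add: P_def u_def v_def algebra_simps)
    then have "\<bar>\<Sum>z\<in>Z. w z * gauss_dens s (x - z)\<bar> = P * \<bar>\<Sum>z\<in>Z. w z * exp (- (norm (u - v z))\<^sup>2 / 2)\<bar>"
      by (simp add: abs_mult P_def)
    also have "\<dots> \<le> P * ((\<Sum>z\<in>Z. \<bar>w z\<bar>) * exp ((real CARD('n))\<^sup>2 + real CARD('n)) * exp (- L)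
        * exp (- (norm u)\<^sup>2 / 8))"
      using moment_matched_gauss_sum_le[OF v L k, of w u] S moments J
      by (intro mult_left_mono) (auto simp: Z_def v_def P_def)
    also have "\<dots> = (\<Sum>z\<in>Z. \<bar>w z\<bar>) * exp ((real CARD('n))\<^sup>2 + real CARD('n)) * exp (- L)
        * (P * exp (- (norm u)\<^sup>2 / 8))"
      by (simp only: mult_ac)
    also have "P * exp (- (norm u)\<^sup>2 / 8) = 2 ^ CARD('n) * gauss_dens (2 * s) (x - cen J)"
      unfolding P_def u_def by (rule gauss_dens_double_scale[OF s])
    finally show ?thesis by (simp add: Z_def mult_ac)
  qed
  moreover have "cell ` S \<subseteq> C" using cell by auto
  then have "(\<Sum>z\<in>S. w z * gauss_dens s (x - z)) = (\<Sum>J\<in>C. \<Sum>z\<in>{z\<in>S. cell z = J}. w z * gauss_dens s (x - z))"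
    using sum.group[OF S C, of cell "\<lambda>z. w z * gauss_dens s (x - z)"] by simp
  ultimately show ?thesis by (auto intro: order_trans[OF sum_abs] sum_mono)
qed

lemma exists_cell_moment_matching_weights:
  fixes cell :: "'z \<Rightarrow> 'c" and v :: "'c \<Rightarrow> 'z \<Rightarrow> real^'n"
  assumes S: "finite S" and C: "finite C" and q: "\<forall>z. 0 \<le> q z"
  shows "\<exists>f. (\<forall>z. 0 \<le> f z) \<and> (\<forall>z. f z \<noteq> 0 \<longrightarrow> z \<in> S) \<and>
    card {z\<in>S. f z \<noteq> 0} \<le> card C * (M + 1) ^ CARD('n) \<and>
    (\<forall>J\<in>C. \<forall>\<alpha>\<in>exps_box M. (\<Sum>z\<in>{z\<in>S. cell z = J}. f z * vmonom \<alpha> (v J z))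
                          = (\<Sum>z\<in>{z\<in>S. cell z = J}. q z * vmonom \<alpha> (v J z)))"
proof -
  define T where "T = C \<times> (exps_box M :: ('n \<Rightarrow> nat) set)"
  define m where "m t z = (if cell z = fst t then vmonom (snd t) (v (fst t) z) else 0)" for t z
  have filter: "(\<Sum>z\<in>S. g z * m (J, \<alpha>) z) = (\<Sum>z\<in>{z\<in>S. cell z = J}. g z * vmonom \<alpha> (v J z))" for g J \<alpha>
    using S by (simp add: m_def sum.inter_filter[symmetric] if_distrib cong: if_cong)
  obtain f where f: "\<forall>z. 0 \<le> f z" "\<forall>z. f z \<noteq> 0 \<longrightarrow> z \<in> S \<and> q z \<noteq> 0"
    "card {z\<in>S. f z \<noteq> 0} \<le> card T" "\<forall>t\<in>T. (\<Sum>z\<in>S. f z * m t z) = (\<Sum>z\<in>S. q z * m t z)"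
    using reduce_support_preserving_moments[OF _ S q, of T m] C by (auto simp: T_def)
  have "card T = card C * (M + 1) ^ CARD('n)" by (simp add: T_def card_cartesian_product card_exps_box)
  moreover have "\<forall>J\<in>C. \<forall>\<alpha>\<in>exps_box M. (\<Sum>z\<in>{z\<in>S. cell z = J}. f z * vmonom \<alpha> (v J z))
                          = (\<Sum>z\<in>{z\<in>S. cell z = J}. q z * vmonom \<alpha> (v J z))"
    using f(4) by (auto simp: T_def filter[symmetric])
  ultimately show ?thesis using f(1-3) by auto
qed

lemma sum_eq_if_cell_masses_eq:
  assumes S: "finite S" and C: "finite C" and cell: "\<forall>z\<in>S. cell z \<in> C"
    and mass: "\<forall>J\<in>C. (\<Sum>z\<in>{z\<in>S. cell z = J}. f z) = (\<Sum>z\<in>{z\<in>S. cell z = J}. q z)"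
  shows "(\<Sum>z\<in>S. f z) = (\<Sum>z\<in>S. q z)"
proof -
  have "cell ` S \<subseteq> C" using cell by auto
  then show ?thesis using mass sum.group[OF S C, of cell f] sum.group[OF S C, of cell q] by simp
qed

definition moment_const :: "nat \<Rightarrow> real" where
  "moment_const d = 2 ^ (d + 1) * exp ((real d)\<^sup>2 + real d)"

lemma moment_const_pos: "moment_const d > 0"
  by (simp add: moment_const_def)

lemma cell_moment_matching_error:
  fixes S :: "(real^'n) set" and cell :: "real^'n \<Rightarrow> 'c" and cen :: "'c \<Rightarrow> real^'n"
  assumes S: "finite S" and C: "finite C" and cell: "\<forall>z\<in>S. cell z \<in> C"
    and near: "\<forall>z\<in>S. \<forall>i. \<bar>(z - cen (cell z)) $ i\<bar> \<le> s / 2" and s: "s > 0"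
    and L: "L \<ge> 1" and k: "real k \<ge> 4 * real CARD('n) * exp 2 * L"
    and q: "\<forall>z. 0 \<le> q z" and f: "\<forall>z. 0 \<le> f z"
    and moments: "\<forall>J\<in>C. \<forall>\<alpha>\<in>exps_box (2 * k).
      (\<Sum>z\<in>{z\<in>S. cell z = J}. f z * vmonom \<alpha> ((1/s) *\<^sub>R (z - cen J)))
      = (\<Sum>z\<in>{z\<in>S. cell z = J}. q z * vmonom \<alpha> ((1/s) *\<^sub>R (z - cen J)))"
  shows "\<bar>\<Sum>z\<in>S. (q z - f z) * gauss_dens s (x - z)\<bar>
     \<le> moment_const CARD('n) * exp (- L) * (\<Sum>J\<in>C. (\<Sum>z\<in>{z\<in>S. cell z = J}. q z) * gauss_dens (2 * s) (x - cen J))"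
proof -
  define K where "K = exp ((real CARD('n))\<^sup>2 + real CARD('n)) * exp (- L) * 2 ^ CARD('n)"
  have "\<bar>\<Sum>z\<in>S. (q z - f z) * gauss_dens s (x - z)\<bar>
     \<le> (\<Sum>J\<in>C. (\<Sum>z\<in>{z\<in>S. cell z = J}. \<bar>q z - f z\<bar>) * K * gauss_dens (2 * s) (x - cen J))"
    using cellwise_moment_matched_gauss_sum_le[OF S C cell near s L k, of "\<lambda>z. q z - f z" x] moments
    by (simp add: K_def left_diff_distrib sum_subtractf mult_ac)
  also have "\<dots> \<le> (\<Sum>J\<in>C. 2 * (\<Sum>z\<in>{z\<in>S. cell z = J}. q z) * K * gauss_dens (2 * s) (x - cen J))"
  proof (intro sum_mono mult_right_mono)
    fix J assume J: "J \<in> C"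
    have zero: "(\<lambda>_. 0) \<in> exps_box (2 * k)" by (simp add: exps_box_def)
    \<comment> \<open>The moment of order zero says that \<open>f\<close> and \<open>q\<close> give the same mass to each cell.\<close>
    have "(\<Sum>z\<in>{z\<in>S. cell z = J}. f z) = (\<Sum>z\<in>{z\<in>S. cell z = J}. q z)"
      using moments[rule_format, OF J zero] by (simp add: vmonom_zero)
    moreover have "\<bar>q z - f z\<bar> \<le> q z + f z" for z using q f by (auto simp: abs_le_iff)
    ultimately show "(\<Sum>z\<in>{z\<in>S. cell z = J}. \<bar>q z - f z\<bar>) \<le> 2 * (\<Sum>z\<in>{z\<in>S. cell z = J}. q z)"
      by (metis (no_types, lifting) mult_2 sum.distrib sum_mono)
  qed (auto simp: K_def gauss_dens_nonneg)
  finally show ?thesis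
    by (simp add: K_def moment_const_def sum_distrib_left mult_ac)
qed

lemma integral_comp_finite_range:
  fixes f :: "'b::t1_space \<Rightarrow> real"
  assumes M: "finite_measure M" and g: "g \<in> borel_measurable M"
    and S: "finite S" and range: "\<forall>x\<in>space M. g x \<in> S"
  shows "(\<integral>x. f (g x) \<partial>M) = (\<Sum>y\<in>S. f y * measure M (g -` {y} \<inter> space M))"
proof -
  interpret finite_measure M by fact
  have sets: "g -` {y} \<inter> space M \<in> sets M" for y
    using measurable_sets[OF g, of "{y}"] by simp
  have "f (g x) = (\<Sum>y\<in>S. f y * indicator (g -` {y} \<inter> space M) x)" if "x \<in> space M" for x
  proof -
    have "(\<Sum>y\<in>S. f y * indicator (g -` {y} \<inter> space M) x) = (\<Sum>y\<in>S. if y = g x then f y else 0)"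
      using that by (intro sum.cong) (auto simp: indicator_def)
    then show ?thesis using S range that by (simp add: sum.delta)
  qed
  then have "(\<integral>x. f (g x) \<partial>M) = (\<integral>x. (\<Sum>y\<in>S. f y * indicator (g -` {y} \<inter> space M) x) \<partial>M)"
    by (intro Bochner_Integration.integral_cong) auto
  also have "\<dots> = (\<Sum>y\<in>S. f y * measure M (g -` {y} \<inter> space M))"
    using sets by (subst Bochner_Integration.integral_sum)
      (auto intro!: integrable_mult_right integrable_real_indicator simp: less_top[symmetric])
  finally show ?thesis .
qed

definition bounded_prob_density :: "real \<Rightarrow> (real^'n \<Rightarrow> real) \<Rightarrow> bool" where
  "bounded_prob_density B e \<longleftrightarrow> e \<in> borel_measurable lborel \<and> (\<forall>x. 0 \<le> e x \<and> e x \<le> B)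
     \<and> (\<integral>\<^sup>+x. ennreal (e x) \<partial>lborel) = 1"

lemma bounded_prob_density_mono:
  "bounded_prob_density B e \<Longrightarrow> B \<le> B' \<Longrightarrow> bounded_prob_density B' e"
  unfolding bounded_prob_density_def by (auto intro: order_trans)

lemma integrable_gauss_dens_comp:
  assumes "finite_measure P" "h \<in> borel_measurable P" "s > 0"
  shows "integrable P (\<lambda>z. gauss_dens s (x - h z :: real^'n))"
proof (rule finite_measure.integrable_const_bound[OF assms(1), where B = "1 / s ^ CARD('n)"])
  show "AE z in P. norm (gauss_dens s (x - h z)) \<le> 1 / s ^ CARD('n)"
    using gauss_dens_le[OF assms(3), of "x - h _"] gauss_dens_nonneg[of s "x - h _"] by (intro AE_I2) simp
qed (use assms(2) in measurable)

lemma bounded_prob_density_mix_dens: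
  fixes P :: "(real^'n) measure"
  assumes P: "prob_space P" and sets: "sets P = sets borel" and s: "s > 0"
  shows "bounded_prob_density (1 / s ^ CARD('n)) (mix_dens P s)"
proof -
  interpret prob_space P by fact
  interpret PS: pair_sigma_finite lborel P
    by (intro pair_sigma_finite.intro sigma_finite_lborel prob_space_imp_sigma_finite P)
  have pair_sets: "sets (lborel \<Otimes>\<^sub>M P) = sets (lborel \<Otimes>\<^sub>M (borel :: (real^'n) measure))"
    by (rule sets_pair_measure_cong) (simp_all add: sets)
  have joint: "(\<lambda>(x, z). gauss_dens s (x - z)) \<in> borel_measurable (lborel \<Otimes>\<^sub>M P)"
    unfolding measurable_cong_sets[OF pair_sets refl] by measurable
  have int: "integrable P (\<lambda>z. gauss_dens s (x - z))" for x
    using integrable_gauss_dens_comp[OF _ measurable_ident_sets[OF sets] s] by (simp add: finite_measure_axioms)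
  have enn: "ennreal (mix_dens P s x) = (\<integral>\<^sup>+z. ennreal (gauss_dens s (x - z)) \<partial>P)" for x
    unfolding mix_dens_def by (rule nn_integral_eq_integral[OF int, symmetric]) (simp add: gauss_dens_nonneg)
  have "mix_dens P s \<in> borel_measurable lborel"
    unfolding mix_dens_def[abs_def] using joint
    by (rule sigma_finite_measure.borel_measurable_lebesgue_integral[OF prob_space_imp_sigma_finite[OF P]])
  moreover have "0 \<le> mix_dens P s x \<and> mix_dens P s x \<le> 1 / s ^ CARD('n)" for x
  proof -
    have "mix_dens P s x \<le> (\<integral>z. 1 / s ^ CARD('n) \<partial>P)"
      unfolding mix_dens_def using int gauss_dens_le[OF s] by (intro integral_mono) auto
    then show ?thesis unfolding mix_dens_def
      by (simp add: prob_space integral_nonneg_AE gauss_dens_nonneg)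
  qed
  moreover have "(\<integral>\<^sup>+x. ennreal (mix_dens P s x) \<partial>lborel) = 1"
  proof -
    have "(\<integral>\<^sup>+x. ennreal (mix_dens P s x) \<partial>lborel)
        = (\<integral>\<^sup>+z. (\<integral>\<^sup>+x. ennreal (gauss_dens s (x - z)) \<partial>lborel) \<partial>P)"
      unfolding enn by (rule PS.Fubini'[symmetric]) (use joint in simp)
    also have "\<dots> = 1" using s by (simp add: nn_integral_gauss_dens_shift emeasure_space_1)
    finally show ?thesis .
  qed
  ultimately show ?thesis unfolding bounded_prob_density_def by blast
qed

lemma bounded_prob_density_gauss_sum:
  assumes I: "finite I" and c: "\<forall>i. 0 \<le> c i" "(\<Sum>i\<in>I. c i) = 1" and s: "s > 0"
  shows "bounded_prob_density (1 / s ^ CARD('n)) (\<lambda>x. \<Sum>i\<in>I. c i * gauss_dens s (x - y i :: real^'n))"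
proof -
  have "(\<Sum>i\<in>I. c i * gauss_dens s (x - y i)) \<le> (\<Sum>i\<in>I. c i * (1 / s ^ CARD('n)))" for x
    using c gauss_dens_le[OF s] by (intro sum_mono mult_left_mono) auto
  then have le: "(\<Sum>i\<in>I. c i * gauss_dens s (x - y i)) \<le> 1 / s ^ CARD('n)" for x
    using c by (simp add: sum_divide_distrib[symmetric])
  have "(\<integral>\<^sup>+x. ennreal (\<Sum>i\<in>I. c i * gauss_dens s (x - y i)) \<partial>lborel)
      = (\<integral>\<^sup>+x. (\<Sum>i\<in>I. ennreal (c i) * ennreal (gauss_dens s (x - y i))) \<partial>lborel)"
    using c by (intro nn_integral_cong) (simp add: ennreal_mult[symmetric] gauss_dens_nonneg sum_nonneg)
  also have "\<dots> = (\<Sum>i\<in>I. ennreal (c i) * (\<integral>\<^sup>+x. ennreal (gauss_dens s (x - y i)) \<partial>lborel))"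
    by (simp add: nn_integral_sum nn_integral_cmult)
  also have "\<dots> = 1" using c s by (simp add: nn_integral_gauss_dens_shift sum_ennreal)
  finally show ?thesis
    using le c unfolding bounded_prob_density_def by (simp add: gauss_dens_nonneg sum_nonneg)
qed

lemma bounded_prob_density_envelope_bounds:
  fixes g :: "real^'n \<Rightarrow> real"
  assumes g: "\<forall>x. \<bar>g x\<bar> \<le> c1 * e1 x + c2 * e2 x" and c: "c1 \<ge> 0" "c2 \<ge> 0"
    and e1: "bounded_prob_density B e1" and e2: "bounded_prob_density B e2"
  shows "\<bar>g x\<bar> \<le> (c1 + c2) * B"
    and "(\<integral>\<^sup>+x. ennreal \<bar>g x\<bar> \<partial>lborel) \<le> ennreal (c1 + c2)"
proof -
  show "\<bar>g x\<bar> \<le> (c1 + c2) * B"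
    using g[rule_format, of x] e1 e2 c mult_left_mono[of "e1 x" B c1] mult_left_mono[of "e2 x" B c2]
    unfolding bounded_prob_density_def by (simp add: distrib_right)
  have "ennreal \<bar>g x\<bar> \<le> ennreal c1 * ennreal (e1 x) + ennreal c2 * ennreal (e2 x)" for x
  proof -
    have "ennreal \<bar>g x\<bar> \<le> ennreal (c1 * e1 x + c2 * e2 x)" using g by (simp add: ennreal_leI)
    also have "\<dots> = ennreal c1 * ennreal (e1 x) + ennreal c2 * ennreal (e2 x)"
      using e1 e2 c unfolding bounded_prob_density_def by (simp add: ennreal_plus ennreal_mult)
    finally show ?thesis .
  qed
  then have "(\<integral>\<^sup>+x. ennreal \<bar>g x\<bar> \<partial>lborel) \<le> (\<integral>\<^sup>+x. ennreal c1 * ennreal (e1 x) + ennreal c2 * ennreal (e2 x) \<partial>lborel)"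
    by (intro nn_integral_mono)
  also have "\<dots> = ennreal (c1 + c2)"
  proof -
    have [measurable]: "e1 \<in> borel_measurable lborel" "e2 \<in> borel_measurable lborel"
      and "(\<integral>\<^sup>+x. ennreal (e1 x) \<partial>lborel) = 1" "(\<integral>\<^sup>+x. ennreal (e2 x) \<partial>lborel) = 1"
      using e1 e2 unfolding bounded_prob_density_def by auto
    then show ?thesis using c by (simp add: nn_integral_add nn_integral_cmult ennreal_plus)
  qed
  finally show "(\<integral>\<^sup>+x. ennreal \<bar>g x\<bar> \<partial>lborel) \<le> ennreal (c1 + c2)" .
qed

section \<open>Discretisation of the mixing measure\<close>

lemma exists_pmf_of_finite_weights:
  assumes S: "finite S" and f: "\<forall>z. 0 \<le> f z" "\<forall>z. f z \<noteq> 0 \<longrightarrow> z \<in> S" "(\<Sum>z\<in>S. f z) = 1"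
  shows "\<exists>F. set_pmf F = {z\<in>S. f z \<noteq> 0} \<and>
    (\<forall>x. mix_dens (measure_pmf F) s x = (\<Sum>z\<in>S. f z * gauss_dens s (x - z :: real^'n)))"
proof -
  have "(\<integral>\<^sup>+z. ennreal (f z) \<partial>count_space UNIV) = (\<Sum>z\<in>S. ennreal (f z))"
    using S f by (intro nn_integral_count_space') auto
  then have prob: "(\<integral>\<^sup>+z. ennreal (f z) \<partial>count_space UNIV) = 1" using f by simp
  define F where "F = embed_pmf f"
  have pmf: "pmf F z = f z" for z unfolding F_def using f prob by (intro pmf_embed_pmf) auto
  have set: "set_pmf F = {z\<in>S. f z \<noteq> 0}" unfolding F_def using f prob by (subst set_embed_pmf) auto
  have "mix_dens (measure_pmf F) s x = (\<Sum>z\<in>S. f z * gauss_dens s (x - z))" for x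
    unfolding mix_dens_def using S set by (subst integral_measure_pmf_real[of S]) (auto simp: pmf mult.commute)
  with set show ?thesis by blast
qed

definition cell_index :: "real \<Rightarrow> real^'n \<Rightarrow> ('n \<Rightarrow> int)" where
  "cell_index \<sigma> z = (\<lambda>i. \<lfloor>z$i / \<sigma>\<rfloor>)"

definition cell_center :: "real \<Rightarrow> ('n \<Rightarrow> int) \<Rightarrow> real^'n" where
  "cell_center \<sigma> J = (\<chi> i. (real_of_int (J i) + 1/2) * \<sigma>)"

definition cube_cells :: "real \<Rightarrow> real \<Rightarrow> ('n::finite \<Rightarrow> int) set" where
  "cube_cells a \<sigma> = {J. \<forall>i. J i \<in> {\<lfloor>- a / \<sigma>\<rfloor>..\<lfloor>a / \<sigma>\<rfloor>}}"

lemma cell_center_dist: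
  assumes "\<sigma> > 0"
  shows "\<bar>(z - cell_center \<sigma> (cell_index \<sigma> z)) $ i\<bar> \<le> \<sigma> / 2"
proof -
  have "real_of_int \<lfloor>z$i / \<sigma>\<rfloor> \<le> z$i / \<sigma>" "z$i / \<sigma> < real_of_int \<lfloor>z$i / \<sigma>\<rfloor> + 1" by linarith+
  then have "\<bar>z$i / \<sigma> - real_of_int \<lfloor>z$i / \<sigma>\<rfloor> - 1/2\<bar> \<le> 1/2" unfolding abs_le_iff by linarith
  then have "\<bar>z$i / \<sigma> - real_of_int \<lfloor>z$i / \<sigma>\<rfloor> - 1/2\<bar> * \<sigma> \<le> 1/2 * \<sigma>" using assms by (intro mult_right_mono) auto
  then show ?thesis using assms by (simp add: cell_center_def cell_index_def abs_mult_pos' algebra_simps diff_divide_distrib)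
qed

lemma cell_index_in_cube_cells:
  assumes "\<sigma> > 0" "z \<in> cube a"
  shows "cell_index \<sigma> z \<in> cube_cells a \<sigma>"
proof -
  have "- a / \<sigma> \<le> z$i / \<sigma> \<and> z$i / \<sigma> \<le> a / \<sigma>" for i
  proof -
    have "\<bar>z$i\<bar> \<le> a" using assms by (simp add: cube_def)
    then have "- a \<le> z$i" "z$i \<le> a" by linarith+
    then show ?thesis using assms divide_right_mono[of "- a" "z$i" \<sigma>] divide_right_mono[of "z$i" a \<sigma>] by auto
  qed
  then show ?thesis by (auto simp: cube_cells_def cell_index_def intro: floor_mono)
qed

lemma cube_cells_eq_PiE: "cube_cells a \<sigma> = PiE UNIV (\<lambda>_. {\<lfloor>- a / \<sigma>\<rfloor>..\<lfloor>a / \<sigma>\<rfloor>})"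
  by (auto simp: cube_cells_def PiE_UNIV_domain)

lemma finite_cube_cells: "finite (cube_cells a \<sigma>)"
  unfolding cube_cells_eq_PiE by (intro finite_PiE) auto

lemma card_cube_cells_le:
  "real (card (cube_cells a \<sigma> :: ('n::finite \<Rightarrow> int) set)) \<le> (4 * max (a / \<sigma>) 1) ^ CARD('n)"
proof -
  define m where "m = \<lfloor>a / \<sigma>\<rfloor> - \<lfloor>- a / \<sigma>\<rfloor> + 1"
  have "real_of_int m \<le> 2 * (a / \<sigma>) + 2" unfolding m_def by linarith
  also have "\<dots> \<le> 4 * max (a / \<sigma>) 1" by simp
  finally have "real (nat m) \<le> 4 * max (a / \<sigma>) 1" by linarith
  then have "real (nat m) ^ CARD('n) \<le> (4 * max (a / \<sigma>) 1) ^ CARD('n)" by (intro power_mono) auto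
  then show ?thesis unfolding cube_cells_eq_PiE by (simp add: card_PiE m_def)
qed

lemma moment_order_le:
  fixes d L :: real
  assumes "d \<ge> 1" "L \<ge> 1"
  shows "real (2 * nat \<lceil>4 * d * exp 2 * L\<rceil> + 1) \<le> 11 * d * exp 2 * L"
proof -
  have "1 * 1 \<le> (d * exp 2) * L" using assms by (intro mult_mono) (auto intro: order_trans[OF _ mult_mono[of 1 d 1 "exp 2"]])
  moreover have "0 \<le> 4 * d * exp 2 * L" using assms by simp
  then have "real (nat \<lceil>4 * d * exp 2 * L\<rceil>) < 4 * d * exp 2 * L + 1" by linarith
  ultimately show ?thesis by simp
qed

lemma quantization_error:
  fixes P0 :: "(real^'n) measure"
  assumes P0: "prob_space P0" and sets: "sets P0 = sets borel" and support: "measure P0 (cube a) = 1"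
    and a: "a > 0" and \<sigma>: "\<sigma> > 0" and \<epsilon>: "0 < \<epsilon>" "\<epsilon> \<le> 1"
  shows "\<exists>q. (\<forall>y. 0 \<le> q y) \<and> (\<Sum>y\<in>grid a \<sigma> \<epsilon>. q y) = 1 \<and>
    (\<forall>x. \<bar>mix_dens P0 \<sigma> x - (\<Sum>y\<in>grid a \<sigma> \<epsilon>. q y * gauss_dens \<sigma> (x - y))\<bar>
       \<le> shift_const CARD('n) * \<epsilon> * mix_dens P0 (2 * \<sigma>) x)"
proof -
  interpret prob_space P0 by fact
  define r where "r = (grid_round (\<sigma> * \<epsilon>) \<lceil>a / (\<sigma> * \<epsilon>)\<rceil> :: real^'n \<Rightarrow> real^'n)"
  define q where "q y = measure P0 (r -` {y} \<inter> space P0)" for y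
  have r: "r \<in> borel_measurable P0" unfolding r_def measurable_cong_sets[OF sets refl] by measurable
  have push: "(\<integral>z. g (r z) \<partial>P0) = (\<Sum>y\<in>grid a \<sigma> \<epsilon>. g y * q y)" for g
    unfolding q_def
    by (rule integral_comp_finite_range[OF finite_measure_axioms r])
      (use a \<sigma> \<epsilon> in \<open>auto simp: r_def finite_grid grid_round_in_grid\<close>)
  have "\<bar>mix_dens P0 \<sigma> x - (\<Sum>y\<in>grid a \<sigma> \<epsilon>. q y * gauss_dens \<sigma> (x - y))\<bar>
      \<le> shift_const CARD('n) * \<epsilon> * mix_dens P0 (2 * \<sigma>) x" for x
  proof -
    have i1: "integrable P0 (\<lambda>z. gauss_dens s (x - z))" if "s > 0" for s
      using integrable_gauss_dens_comp[OF _ measurable_ident_sets[OF sets] that] by (simp add: finite_measure_axioms)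
    have i2: "integrable P0 (\<lambda>z. gauss_dens \<sigma> (x - r z))"
      by (rule integrable_gauss_dens_comp[OF finite_measure_axioms r \<sigma>])
    have "mix_dens P0 \<sigma> x - (\<Sum>y\<in>grid a \<sigma> \<epsilon>. q y * gauss_dens \<sigma> (x - y))
        = (\<integral>z. gauss_dens \<sigma> (x - z) - gauss_dens \<sigma> (x - r z) \<partial>P0)"
      using push[of "\<lambda>y. gauss_dens \<sigma> (x - y)"]
      by (simp add: mix_dens_def Bochner_Integration.integral_diff[OF i1[OF \<sigma>] i2] mult.commute)
    then have "\<bar>mix_dens P0 \<sigma> x - (\<Sum>y\<in>grid a \<sigma> \<epsilon>. q y * gauss_dens \<sigma> (x - y))\<bar>
        \<le> (\<integral>z. \<bar>gauss_dens \<sigma> (x - z) - gauss_dens \<sigma> (x - r z)\<bar> \<partial>P0)"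
      using integral_norm_bound[of P0 "\<lambda>z. gauss_dens \<sigma> (x - z) - gauss_dens \<sigma> (x - r z)"] by simp
    also have "\<dots> \<le> (\<integral>z. shift_const CARD('n) * \<epsilon> * gauss_dens (2 * \<sigma>) (x - z) \<partial>P0)"
    proof (rule integral_mono_AE)
      have "AE z in P0. z \<in> cube a"
        using support by (intro AE_prob_1) simp
      then show "AE z in P0. \<bar>gauss_dens \<sigma> (x - z) - gauss_dens \<sigma> (x - r z)\<bar>
          \<le> shift_const CARD('n) * \<epsilon> * gauss_dens (2 * \<sigma>) (x - z)"
      proof (rule AE_mp, intro AE_I2 impI)
        fix z :: "real^'n" assume "z \<in> cube a"
        then show "\<bar>gauss_dens \<sigma> (x - z) - gauss_dens \<sigma> (x - r z)\<bar>
            \<le> shift_const CARD('n) * \<epsilon> * gauss_dens (2 * \<sigma>) (x - z)"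
          using \<sigma> \<epsilon> a by (auto intro!: gauss_dens_shift_le grid_round_err simp: r_def)
      qed
    qed (use i1 i2 \<sigma> in auto)
    finally show ?thesis by (simp add: mix_dens_def)
  qed
  moreover have "(\<Sum>y\<in>grid a \<sigma> \<epsilon>. q y) = 1" using push[of "\<lambda>_. 1"] by (simp add: prob_space)
  ultimately show ?thesis by (intro exI[of _ q]) (simp add: q_def)
qed

lemma card_cube_cells_mult_moments_le:
  assumes L: "L \<ge> 1"
  shows "real (card (cube_cells a \<sigma> :: ('n::finite \<Rightarrow> int) set) * (2 * nat \<lceil>4 * real CARD('n) * exp 2 * L\<rceil> + 1) ^ CARD('n))
    \<le> (44 * real CARD('n) * exp 2) ^ CARD('n) * (max (a / \<sigma>) 1 * L) ^ CARD('n)"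
proof -
  define d M k where "d = real CARD('n)" and "M = max (a / \<sigma>) 1" and "k = nat \<lceil>4 * d * exp 2 * L\<rceil>"
  have k: "real (2 * k + 1) \<le> 11 * d * exp 2 * L" using moment_order_le[of d L] L by (simp add: k_def d_def)
  have "real (card (cube_cells a \<sigma> :: ('n \<Rightarrow> int) set) * (2 * k + 1) ^ CARD('n))
      = real (card (cube_cells a \<sigma> :: ('n \<Rightarrow> int) set)) * real (2 * k + 1) ^ CARD('n)" by simp
  also have "\<dots> \<le> (4 * M) ^ CARD('n) * (11 * d * exp 2 * L) ^ CARD('n)"
    using card_cube_cells_le k by (intro mult_mono power_mono) (auto simp: M_def)
  also have "(4 * M) * (11 * d * exp 2 * L) = (44 * d * exp 2) * (M * L)" by (simp add: algebra_simps)
  then have "(4 * M) ^ CARD('n) * (11 * d * exp 2 * L) ^ CARD('n) = (44 * d * exp 2) ^ CARD('n) * (M * L) ^ CARD('n)"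
    by (metis power_mult_distrib)
  finally show ?thesis by (simp add: d_def M_def k_def)
qed

lemma inverse_power_double_le: "(\<sigma> :: real) > 0 \<Longrightarrow> 1 / (2 * \<sigma>) ^ n \<le> 1 / \<sigma> ^ n"
  by (intro divide_left_mono power_mono) auto

lemma exists_moment_matched_weights_on_cube:
  fixes S :: "(real^'n) set"
  assumes S: "finite S" "S \<subseteq> cube a" and q: "\<forall>z. 0 \<le> q z" "(\<Sum>z\<in>S. q z) = 1"
    and \<sigma>: "\<sigma> > 0" and L: "L \<ge> 1"
  shows "\<exists>f e. (\<forall>z. 0 \<le> f z) \<and> (\<forall>z. f z \<noteq> 0 \<longrightarrow> z \<in> S) \<and> (\<Sum>z\<in>S. f z) = 1 \<and>
     real (card {z\<in>S. f z \<noteq> 0}) \<le> (44 * real CARD('n) * exp 2) ^ CARD('n) * (max (a / \<sigma>) 1 * L) ^ CARD('n) \<and>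
     bounded_prob_density (1 / \<sigma> ^ CARD('n)) e \<and>
     (\<forall>x. \<bar>\<Sum>z\<in>S. (q z - f z) * gauss_dens \<sigma> (x - z)\<bar> \<le> moment_const CARD('n) * exp (- L) * e x)"
proof -
  define d where "d = real CARD('n)"
  define k where "k = nat \<lceil>4 * d * exp 2 * L\<rceil>"
  define C where "C = (cube_cells a \<sigma> :: ('n \<Rightarrow> int) set)"
  define mass where "mass J = (\<Sum>z\<in>{z\<in>S. cell_index \<sigma> z = J}. q z)" for J
  have C: "finite C" by (simp add: C_def finite_cube_cells)
  have cell: "\<forall>z\<in>S. cell_index \<sigma> z \<in> C" using S \<sigma> by (auto simp: C_def cell_index_in_cube_cells)
  have near: "\<forall>z\<in>S. \<forall>i. \<bar>(z - cell_center \<sigma> (cell_index \<sigma> z)) $ i\<bar> \<le> \<sigma> / 2"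
    using cell_center_dist[OF \<sigma>] by blast
  have k: "real k \<ge> 4 * real CARD('n) * exp 2 * L" by (simp add: k_def d_def real_nat_ceiling_ge)
  obtain f where f: "\<forall>z. 0 \<le> f z" "\<forall>z. f z \<noteq> 0 \<longrightarrow> z \<in> S"
    "card {z\<in>S. f z \<noteq> 0} \<le> card C * (2 * k + 1) ^ CARD('n)"
    and moments: "\<forall>J\<in>C. \<forall>\<alpha>\<in>exps_box (2 * k).
      (\<Sum>z\<in>{z\<in>S. cell_index \<sigma> z = J}. f z * vmonom \<alpha> ((1/\<sigma>) *\<^sub>R (z - cell_center \<sigma> J)))
      = (\<Sum>z\<in>{z\<in>S. cell_index \<sigma> z = J}. q z * vmonom \<alpha> ((1/\<sigma>) *\<^sub>R (z - cell_center \<sigma> J)))"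
    using exists_cell_moment_matching_weights[OF S(1) C q(1), where M = "2 * k" and cell = "cell_index \<sigma>"
        and v = "\<lambda>J z. (1/\<sigma>) *\<^sub>R (z - cell_center \<sigma> J)"] by blast
  have zero: "(\<lambda>_. 0) \<in> exps_box (2 * k)" by (simp add: exps_box_def)
  have "\<forall>J\<in>C. (\<Sum>z\<in>{z\<in>S. cell_index \<sigma> z = J}. f z) = (\<Sum>z\<in>{z\<in>S. cell_index \<sigma> z = J}. q z)"
  proof
    fix J assume "J \<in> C"
    from moments[rule_format, OF this zero]
    show "(\<Sum>z\<in>{z\<in>S. cell_index \<sigma> z = J}. f z) = (\<Sum>z\<in>{z\<in>S. cell_index \<sigma> z = J}. q z)"
      by (simp add: vmonom_zero)
  qed
  then have "(\<Sum>z\<in>S. f z) = (\<Sum>z\<in>S. q z)" by (rule sum_eq_if_cell_masses_eq[OF S(1) C cell])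
  moreover have "real (card {z\<in>S. f z \<noteq> 0})
      \<le> (44 * real CARD('n) * exp 2) ^ CARD('n) * (max (a / \<sigma>) 1 * L) ^ CARD('n)"
    by (rule order_trans[OF of_nat_mono[OF f(3)[unfolded C_def k_def d_def]] card_cube_cells_mult_moments_le[OF L]])
  moreover have "(\<Sum>J\<in>C. mass J) = 1"
    using sum.group[OF S(1) C, of "cell_index \<sigma>" q] cell q(2) by (auto simp: mass_def)
  then have "bounded_prob_density (1 / \<sigma> ^ CARD('n)) (\<lambda>x. \<Sum>J\<in>C. mass J * gauss_dens (2 * \<sigma>) (x - cell_center \<sigma> J))"
    using C q(1) \<sigma> inverse_power_double_le[OF \<sigma>]
    by (intro bounded_prob_density_mono[OF bounded_prob_density_gauss_sum])
      (auto simp: mass_def sum_nonneg)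
  moreover have "\<bar>\<Sum>z\<in>S. (q z - f z) * gauss_dens \<sigma> (x - z)\<bar>
      \<le> moment_const CARD('n) * exp (- L) * (\<Sum>J\<in>C. mass J * gauss_dens (2 * \<sigma>) (x - cell_center \<sigma> J))" for x
    unfolding mass_def by (rule cell_moment_matching_error[OF S(1) C cell near \<sigma> L k q(1) f(1) moments])
  ultimately show ?thesis using f(1,2) q(2)
    by (intro exI[of _ f] exI[of _ "\<lambda>x. \<Sum>J\<in>C. mass J * gauss_dens (2 * \<sigma>) (x - cell_center \<sigma> J)"]) simp
qed

lemma one_le_ln_inverse: "0 < (\<epsilon> :: real) \<Longrightarrow> \<epsilon> < exp (-1) \<Longrightarrow> 1 \<le> ln (1 / \<epsilon>)"
  using ln_less_cancel_iff[of "exp 1" "1 / \<epsilon>"] by (simp add: exp_minus field_simps)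

lemma exists_grid_weights_mixture_error:
  fixes P0 :: "(real^'n) measure"
  assumes a: "a > 0" and P0: "prob_space P0" and sets: "sets P0 = sets borel"
    and support: "measure P0 (cube a) = 1" and \<epsilon>: "0 < \<epsilon>" "\<epsilon> < exp (-1)" and \<sigma>: "\<sigma> > 0"
  shows "\<exists>f e1 e2. (\<forall>z. 0 \<le> f z) \<and> (\<forall>z. f z \<noteq> 0 \<longrightarrow> z \<in> grid a \<sigma> \<epsilon>) \<and> (\<Sum>z\<in>grid a \<sigma> \<epsilon>. f z) = 1 \<and>
     real (card {z\<in>grid a \<sigma> \<epsilon>. f z \<noteq> 0})
       \<le> (44 * real CARD('n) * exp 2) ^ CARD('n) * (max (a / \<sigma>) 1 * ln (1 / \<epsilon>)) ^ CARD('n) \<and>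
     bounded_prob_density (1 / \<sigma> ^ CARD('n)) e1 \<and> bounded_prob_density (1 / \<sigma> ^ CARD('n)) e2 \<and>
     (\<forall>x. \<bar>mix_dens P0 \<sigma> x - (\<Sum>z\<in>grid a \<sigma> \<epsilon>. f z * gauss_dens \<sigma> (x - z))\<bar>
        \<le> shift_const CARD('n) * \<epsilon> * e1 x + moment_const CARD('n) * \<epsilon> * e2 x)"
proof -
  define L where "L = ln (1 / \<epsilon>)"
  have L: "L \<ge> 1" "exp (- L) = \<epsilon>"
    using one_le_ln_inverse[OF \<epsilon>] \<epsilon> by (simp_all add: L_def ln_div)
  have \<epsilon>_le: "\<epsilon> \<le> 1" using \<epsilon> by (smt (verit) exp_le_one_iff)
  have grid: "finite (grid a \<sigma> \<epsilon>)" "grid a \<sigma> \<epsilon> \<subseteq> cube a"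
    using \<sigma> \<epsilon> by (auto simp: finite_grid grid_subset_cube)
  obtain q where q: "\<forall>y. 0 \<le> q y" "(\<Sum>y\<in>grid a \<sigma> \<epsilon>. q y) = 1"
    and quant: "\<forall>x. \<bar>mix_dens P0 \<sigma> x - (\<Sum>y\<in>grid a \<sigma> \<epsilon>. q y * gauss_dens \<sigma> (x - y))\<bar>
       \<le> shift_const CARD('n) * \<epsilon> * mix_dens P0 (2 * \<sigma>) x"
    using quantization_error[OF P0 sets support a \<sigma> \<epsilon>(1) \<epsilon>_le] by blast
  obtain f e where f: "\<forall>z. 0 \<le> f z" "\<forall>z. f z \<noteq> 0 \<longrightarrow> z \<in> grid a \<sigma> \<epsilon>" "(\<Sum>z\<in>grid a \<sigma> \<epsilon>. f z) = 1"
    and card: "real (card {z\<in>grid a \<sigma> \<epsilon>. f z \<noteq> 0})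
      \<le> (44 * real CARD('n) * exp 2) ^ CARD('n) * (max (a / \<sigma>) 1 * L) ^ CARD('n)"
    and e: "bounded_prob_density (1 / \<sigma> ^ CARD('n)) e"
    and matched: "\<forall>x. \<bar>\<Sum>z\<in>grid a \<sigma> \<epsilon>. (q z - f z) * gauss_dens \<sigma> (x - z)\<bar> \<le> moment_const CARD('n) * \<epsilon> * e x"
    using exists_moment_matched_weights_on_cube[OF grid q \<sigma> L(1)] L(2) by auto
  have "\<bar>mix_dens P0 \<sigma> x - (\<Sum>z\<in>grid a \<sigma> \<epsilon>. f z * gauss_dens \<sigma> (x - z))\<bar>
      \<le> shift_const CARD('n) * \<epsilon> * mix_dens P0 (2 * \<sigma>) x + moment_const CARD('n) * \<epsilon> * e x" for x
  proof -
    have "(\<Sum>z\<in>grid a \<sigma> \<epsilon>. (q z - f z) * gauss_dens \<sigma> (x - z))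
        = (\<Sum>z\<in>grid a \<sigma> \<epsilon>. q z * gauss_dens \<sigma> (x - z)) - (\<Sum>z\<in>grid a \<sigma> \<epsilon>. f z * gauss_dens \<sigma> (x - z))"
      by (simp add: left_diff_distrib sum_subtractf)
    then show ?thesis using quant[rule_format, of x] matched[rule_format, of x] by (smt (verit))
  qed
  moreover have "bounded_prob_density (1 / \<sigma> ^ CARD('n)) (mix_dens P0 (2 * \<sigma>))"
    using \<sigma> by (intro bounded_prob_density_mono[OF bounded_prob_density_mix_dens[OF P0 sets]]
        inverse_power_double_le) auto
  ultimately show ?thesis using f card e unfolding L_def by blast
qed

lemma gauss_mixture_grid_approximation:
  fixes P0 :: "(real^'n) measure"
  assumes a: "a > 0" and P0: "prob_space P0" and sets: "sets P0 = sets borel"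
    and support: "measure P0 (cube a) = 1" and \<epsilon>: "0 < \<epsilon>" "\<epsilon> < exp (-1)" and \<sigma>: "\<sigma> > 0"
  shows "\<exists>F :: (real^'n) pmf. finite (set_pmf F) \<and> set_pmf F \<subseteq> cube a \<and> set_pmf F \<subseteq> grid a \<sigma> \<epsilon> \<and>
     real (card (set_pmf F)) \<le> (44 * real CARD('n) * exp 2) ^ CARD('n) * (max (a / \<sigma>) 1 * ln (1 / \<epsilon>)) ^ CARD('n) \<and>
     (\<forall>x. \<bar>mix_dens P0 \<sigma> x - mix_dens (measure_pmf F) \<sigma> x\<bar>
        \<le> (shift_const CARD('n) + moment_const CARD('n)) * \<epsilon> / \<sigma> ^ CARD('n)) \<and>
     (\<integral>\<^sup>+ x. ennreal \<bar>mix_dens P0 \<sigma> x - mix_dens (measure_pmf F) \<sigma> x\<bar> \<partial>lborel)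
        \<le> ennreal ((shift_const CARD('n) + moment_const CARD('n)) * \<epsilon>)"
proof -
  obtain f e1 e2 where f: "\<forall>z. 0 \<le> f z" "\<forall>z. f z \<noteq> 0 \<longrightarrow> z \<in> grid a \<sigma> \<epsilon>" "(\<Sum>z\<in>grid a \<sigma> \<epsilon>. f z) = 1"
    and card: "real (card {z\<in>grid a \<sigma> \<epsilon>. f z \<noteq> 0})
      \<le> (44 * real CARD('n) * exp 2) ^ CARD('n) * (max (a / \<sigma>) 1 * ln (1 / \<epsilon>)) ^ CARD('n)"
    and e: "bounded_prob_density (1 / \<sigma> ^ CARD('n)) e1" "bounded_prob_density (1 / \<sigma> ^ CARD('n)) e2"
    and err: "\<forall>x. \<bar>mix_dens P0 \<sigma> x - (\<Sum>z\<in>grid a \<sigma> \<epsilon>. f z * gauss_dens \<sigma> (x - z))\<bar>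
        \<le> shift_const CARD('n) * \<epsilon> * e1 x + moment_const CARD('n) * \<epsilon> * e2 x"
    using exists_grid_weights_mixture_error[OF assms] by blast
  have grid: "finite (grid a \<sigma> \<epsilon>)" "grid a \<sigma> \<epsilon> \<subseteq> cube a"
    using \<sigma> \<epsilon> by (auto simp: finite_grid grid_subset_cube)
  obtain F :: "(real^'n) pmf" where F: "set_pmf F = {z\<in>grid a \<sigma> \<epsilon>. f z \<noteq> 0}"
    "\<forall>x. mix_dens (measure_pmf F) \<sigma> x = (\<Sum>z\<in>grid a \<sigma> \<epsilon>. f z * gauss_dens \<sigma> (x - z))"
    using exists_pmf_of_finite_weights[OF grid(1) f] by blast
  have c: "shift_const CARD('n) * \<epsilon> \<ge> 0" "moment_const CARD('n) * \<epsilon> \<ge> 0"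
    using shift_const_pos[of "CARD('n)"] moment_const_pos[of "CARD('n)"] \<epsilon> by auto
  note bounds = bounded_prob_density_envelope_bounds[OF err[folded F(2)[rule_format]] c e]
  have "\<forall>x. \<bar>mix_dens P0 \<sigma> x - mix_dens (measure_pmf F) \<sigma> x\<bar>
      \<le> (shift_const CARD('n) + moment_const CARD('n)) * \<epsilon> / \<sigma> ^ CARD('n)"
    and "(\<integral>\<^sup>+ x. ennreal \<bar>mix_dens P0 \<sigma> x - mix_dens (measure_pmf F) \<sigma> x\<bar> \<partial>lborel)
      \<le> ennreal ((shift_const CARD('n) + moment_const CARD('n)) * \<epsilon>)"
    using bounds by (simp_all add: distrib_right)
  moreover have "finite (set_pmf F)" "set_pmf F \<subseteq> cube a" "set_pmf F \<subseteq> grid a \<sigma> \<epsilon>"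
    using F(1) grid by auto
  ultimately show ?thesis using card F(1) by (intro exI[of _ F]) auto
qed

theorem corollary1:
  fixes a :: real
  assumes a_pos: "a > 0"
  shows "\<exists>D C1 C2 :: real. D > 0 \<and> C1 > 0 \<and> C2 > 0 \<and>
    (\<forall>(P0 :: (real^'n) measure) \<epsilon> \<sigma>.
       prob_space P0 \<longrightarrow> sets P0 = sets borel \<longrightarrow> measure P0 (cube a) = 1 \<longrightarrow>
       0 < \<epsilon> \<longrightarrow> \<epsilon> < exp (-1) \<longrightarrow> 0 < \<sigma> \<longrightarrow>
       (\<exists>F :: (real^'n) pmf.
          finite (set_pmf F) \<and>
          set_pmf F \<subseteq> cube a \<and>
          set_pmf F \<subseteq> grid a \<sigma> \<epsilon> \<and>
          real (card (set_pmf F)) \<le> D * (max (a / \<sigma>) 1 * ln (1 / \<epsilon>)) ^ CARD('n) \<and>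
          (\<forall>x. \<bar>mix_dens P0 \<sigma> x - mix_dens (measure_pmf F) \<sigma> x\<bar> \<le> C1 * \<epsilon> / \<sigma> ^ CARD('n)) \<and>
          (\<integral>\<^sup>+ x. ennreal \<bar>mix_dens P0 \<sigma> x - mix_dens (measure_pmf F) \<sigma> x\<bar> \<partial>lborel)
             \<le> ennreal (C2 * \<epsilon> * sqrt (ln (1 / \<epsilon>)))))"
proof -
  define C where "C = shift_const CARD('n) + moment_const CARD('n)"
  define D :: real where "D = (44 * real CARD('n) * exp 2) ^ CARD('n)"
  have C: "C > 0" using shift_const_pos[of "CARD('n)"] moment_const_pos[of "CARD('n)"] by (simp add: C_def)
  have D: "D > 0" by (simp add: D_def)
  show ?thesis
  proof (rule exI[of _ D], rule exI[of _ C], rule exI[of _ C], intro conjI C D allI impI)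
    fix P0 :: "(real^'n) measure" and \<epsilon> \<sigma> :: real
    assume P0: "prob_space P0" "sets P0 = sets borel" "measure P0 (cube a) = 1"
      and \<epsilon>: "0 < \<epsilon>" "\<epsilon> < exp (-1)" and \<sigma>: "0 < \<sigma>"
    have "1 \<le> ln (1 / \<epsilon>)" using \<epsilon> by (rule one_le_ln_inverse)
    then have "ennreal (C * \<epsilon>) \<le> ennreal (C * \<epsilon> * sqrt (ln (1 / \<epsilon>)))"
      using C \<epsilon> mult_left_mono[of 1 "sqrt (ln (1 / \<epsilon>))" "C * \<epsilon>"] by (intro ennreal_leI) simp
    with gauss_mixture_grid_approximation[OF a_pos P0 \<epsilon> \<sigma>] show "\<exists>F :: (real^'n) pmf.
          finite (set_pmf F) \<and>
          set_pmf F \<subseteq> cube a \<and>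
          set_pmf F \<subseteq> grid a \<sigma> \<epsilon> \<and>
          real (card (set_pmf F)) \<le> D * (max (a / \<sigma>) 1 * ln (1 / \<epsilon>)) ^ CARD('n) \<and>
          (\<forall>x. \<bar>mix_dens P0 \<sigma> x - mix_dens (measure_pmf F) \<sigma> x\<bar> \<le> C * \<epsilon> / \<sigma> ^ CARD('n)) \<and>
          (\<integral>\<^sup>+ x. ennreal \<bar>mix_dens P0 \<sigma> x - mix_dens (measure_pmf F) \<sigma> x\<bar> \<partial>lborel)
             \<le> ennreal (C * \<epsilon> * sqrt (ln (1 / \<epsilon>)))"
      unfolding C_def D_def by (meson order_trans)
  qed
qed

end
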